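(* Let $G$ be a finite group and let $H \le G$ be a subgroup with $H \neq \{e\}$. Let $C_1, \ldots, C_k$ denote the non-identity conjugacy classes of $G$. Then \[ \sum_{i=1}^k \frac{|C_i \cap H|^2}{|H|\,|C_i|} \;<\; D_H \;\le\; \sum_{i=1}^k |C_i \cap H|\,|C_i|^{-1/2}. \]
   Context: For a finite group $G$, let $\mathrm{Irr}(G)$ be the set of complex irreducible characters of $G$, and for $\chi \in \mathrm{Irr}(G)$ let $d_\chi = \chi(e)$ be its degree. For a subgroup $H \le G$ define the probability distribution $P_H$ on $\mathrm{Irr}(G)$ by $P_H(\chi) = \frac{d_\chi}{|G|}\sum_{h \in H}\chi(h)$ (the distribution obtained by weak quantum Fourier sampling), and define the total variation ($L_1$) distance \[ D_H = \sum_{\chi \in \mathrm{Irr}(G)} |P_H(\chi) - P_{\{e\}}(\chi)| = \frac{1}{|G|}\sum_{\chi \in \mathrm{Irr}(G)} d_\chi \Big|\sum_{h \in H,\, h \neq e} \chi(h)\Big|. \] *)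

theory Defs
  imports "HOL-Algebra.Group" "Jordan_Normal_Form.Matrix"
begin

definition is_rep :: "('g, 'b) monoid_scheme \<Rightarrow> nat \<Rightarrow> ('g \<Rightarrow> complex mat) \<Rightarrow> bool" where
  "is_rep G n \<rho> \<longleftrightarrow> 0 < n \<and>
     (\<forall>g \<in> carrier G. \<rho> g \<in> carrier_mat n n) \<and>
     \<rho> \<one>\<^bsub>G\<^esub> = one_mat n \<and>
     (\<forall>g \<in> carrier G. \<forall>h \<in> carrier G. \<rho> (g \<otimes>\<^bsub>G\<^esub> h) = \<rho> g * \<rho> h)"

definition is_subspace_vec :: "nat \<Rightarrow> complex vec set \<Rightarrow> bool" where
  "is_subspace_vec n W \<longleftrightarrow> W \<subseteq> carrier_vec n \<and> 0\<^sub>v n \<in> W \<and>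
     (\<forall>v \<in> W. \<forall>w \<in> W. v + w \<in> W) \<and> (\<forall>c. \<forall>v \<in> W. c \<cdot>\<^sub>v v \<in> W)"

definition is_irr_rep :: "('g, 'b) monoid_scheme \<Rightarrow> nat \<Rightarrow> ('g \<Rightarrow> complex mat) \<Rightarrow> bool" where
  "is_irr_rep G n \<rho> \<longleftrightarrow> is_rep G n \<rho> \<and>
     (\<forall>W. is_subspace_vec n W \<and> (\<forall>g \<in> carrier G. \<forall>v \<in> W. \<rho> g *\<^sub>v v \<in> W)
          \<longrightarrow> W = {0\<^sub>v n} \<or> W = carrier_vec n)"

definition mat_trace :: "complex mat \<Rightarrow> complex" where
  "mat_trace A = (\<Sum>i<dim_row A. A $$ (i, i))"

definition character :: "('g, 'b) monoid_scheme \<Rightarrow> ('g \<Rightarrow> complex mat) \<Rightarrow> 'g \<Rightarrow> complex" where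
  "character G \<rho> = (\<lambda>g. if g \<in> carrier G then mat_trace (\<rho> g) else 0)"

definition Irr :: "('g, 'b) monoid_scheme \<Rightarrow> ('g \<Rightarrow> complex) set" where
  "Irr G = {\<chi>. \<exists>n \<rho>. is_irr_rep G n \<rho> \<and> \<chi> = character G \<rho>}"

definition char_degree :: "('g, 'b) monoid_scheme \<Rightarrow> ('g \<Rightarrow> complex) \<Rightarrow> complex" where
  "char_degree G \<chi> = \<chi> \<one>\<^bsub>G\<^esub>"

definition P_dist :: "('g, 'b) monoid_scheme \<Rightarrow> 'g set \<Rightarrow> ('g \<Rightarrow> complex) \<Rightarrow> complex" where
  "P_dist G H \<chi> = char_degree G \<chi> / of_nat (card (carrier G)) * (\<Sum>h\<in>H. \<chi> h)"

definition D_dist :: "('g, 'b) monoid_scheme \<Rightarrow> 'g set \<Rightarrow> real" where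
  "D_dist G H = (\<Sum>\<chi>\<in>Irr G. cmod (P_dist G H \<chi> - P_dist G {\<one>\<^bsub>G\<^esub>} \<chi>))"

definition conj_class :: "('g, 'b) monoid_scheme \<Rightarrow> 'g \<Rightarrow> 'g set" where
  "conj_class G x = {g \<otimes>\<^bsub>G\<^esub> x \<otimes>\<^bsub>G\<^esub> inv\<^bsub>G\<^esub> g | g. g \<in> carrier G}"

definition conj_classes :: "('g, 'b) monoid_scheme \<Rightarrow> 'g set set" where
  "conj_classes G = conj_class G ` carrier G"

end

theory Submission
  imports Defs "Jordan_Normal_Form.Schur_Decomposition" "HOL-Algebra.Multiplicative_Group"
    "HOL-Analysis.L2_Norm"
begin

text \<open>Write \<open>D_H = |G|\<inverse> \<Sum>\<chi> \<chi>(1) |S \<chi>|\<close>, where \<open>S \<chi>\<close> is the sum of \<open>\<chi>\<close> over \<open>H - {1}\<close>.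
  Both bounds rest on column orthogonality, \<open>\<Sum>\<chi> \<chi>(g) \<chi>(k)\<^sup>* = |{x. x g x\<inverse> = k}|\<close>, which gives
  \<open>\<Sum>\<chi> \<chi>(1)\<^sup>2 = |G|\<close> and \<open>\<Sum>\<chi> |\<chi>(g)|\<^sup>2 = |G| / |C\<^sub>g|\<close>. For the upper bound, estimate \<open>|S \<chi>|\<close>
  termwise and apply Cauchy--Schwarz in \<open>\<chi>\<close> to \<open>\<Sum>\<chi> \<chi>(1) |\<chi>(h)|\<close>. For the lower bound, the second
  moment \<open>\<Sum>\<chi> |S \<chi>|\<^sup>2\<close> equals \<open>|G| \<Sum>\<^sub>C |C \<inter> H|\<^sup>2 / |C|\<close>, while \<open>|S \<chi>| \<le> (|H| - 1) \<chi>(1)\<close> bounds it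
  by \<open>(|H| - 1) |G| D_H\<close>; the inequality is strict because the trivial character makes \<open>D_H\<close>
  positive.

  The character theory needed is obtained for matrix representations: Schur's lemma from an
  eigenvector, orthogonality of irreducible characters from averaged intertwiners, and the
  decomposition of every character into irreducible ones by triangularising along invariant
  subspaces, applied to the regular representation.\<close>

definition mat_sum :: "nat \<Rightarrow> nat \<Rightarrow> ('x \<Rightarrow> 'a :: comm_monoid_add mat) \<Rightarrow> 'x set \<Rightarrow> 'a mat" where
  "mat_sum nr nc f S = mat nr nc (\<lambda>(i,j). \<Sum>x\<in>S. f x $$ (i,j))"

lemma mat_sum_carrier [simp]: "mat_sum nr nc f S \<in> carrier_mat nr nc"
  and dim_mat_sum [simp]: "dim_row (mat_sum nr nc f S) = nr" "dim_col (mat_sum nr nc f S) = nc"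
  and index_mat_sum [simp]: "i < nr \<Longrightarrow> j < nc \<Longrightarrow> mat_sum nr nc f S $$ (i,j) = (\<Sum>x\<in>S. f x $$ (i,j))"
  unfolding mat_sum_def by auto

lemma mat_sum_cong: "(\<And>x. x \<in> S \<Longrightarrow> f x = g x) \<Longrightarrow> mat_sum nr nc f S = mat_sum nr nc g S"
  unfolding mat_sum_def by (intro cong_mat) auto

lemma mat_sum_reindex:
  assumes "bij_betw h S T"
  shows "mat_sum nr nc f T = mat_sum nr nc (\<lambda>x. f (h x)) S"
  unfolding mat_sum_def by (intro cong_mat) (auto simp: sum.reindex_bij_betw[OF assms, symmetric])

lemma mult_mat_sum_left:
  fixes A :: "'a :: comm_semiring_0 mat"
  assumes A: "A \<in> carrier_mat k nr" and f: "\<And>x. x \<in> S \<Longrightarrow> f x \<in> carrier_mat nr nc"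
  shows "A * mat_sum nr nc f S = mat_sum k nc (\<lambda>x. A * f x) S"
proof (rule eq_matI)
  fix i j assume "i < dim_row (mat_sum k nc (\<lambda>x. A * f x) S)" "j < dim_col (mat_sum k nc (\<lambda>x. A * f x) S)"
  hence i: "i < k" and j: "j < nc" by auto
  have "(A * mat_sum nr nc f S) $$ (i,j) = (\<Sum>l<nr. A $$ (i,l) * (\<Sum>x\<in>S. f x $$ (l,j)))"
    using A i j by (simp add: scalar_prod_def lessThan_atLeast0)
  also have "\<dots> = (\<Sum>x\<in>S. \<Sum>l<nr. A $$ (i,l) * f x $$ (l,j))"
    by (simp add: sum_distrib_left sum.swap[of _ S])
  also have "\<dots> = (\<Sum>x\<in>S. (A * f x) $$ (i,j))"
    using A i j f[THEN carrier_matD(1)] f[THEN carrier_matD(2)]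
    by (intro sum.cong) (auto simp: scalar_prod_def lessThan_atLeast0)
  finally show "(A * mat_sum nr nc f S) $$ (i,j) = mat_sum k nc (\<lambda>x. A * f x) S $$ (i,j)"
    using i j by simp
qed (use A in auto)

lemma mult_mat_sum_right:
  fixes B :: "'a :: comm_semiring_0 mat"
  assumes B: "B \<in> carrier_mat nc k" and f: "\<And>x. x \<in> S \<Longrightarrow> f x \<in> carrier_mat nr nc"
  shows "mat_sum nr nc f S * B = mat_sum nr k (\<lambda>x. f x * B) S"
proof (rule eq_matI)
  fix i j assume "i < dim_row (mat_sum nr k (\<lambda>x. f x * B) S)" "j < dim_col (mat_sum nr k (\<lambda>x. f x * B) S)"
  hence i: "i < nr" and j: "j < k" by auto
  have "(mat_sum nr nc f S * B) $$ (i,j) = (\<Sum>l<nc. (\<Sum>x\<in>S. f x $$ (i,l)) * B $$ (l,j))"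
    using B i j by (simp add: scalar_prod_def lessThan_atLeast0)
  also have "\<dots> = (\<Sum>x\<in>S. \<Sum>l<nc. f x $$ (i,l) * B $$ (l,j))"
    by (simp add: sum_distrib_right sum.swap[of _ S])
  also have "\<dots> = (\<Sum>x\<in>S. (f x * B) $$ (i,j))"
    using B i j f[THEN carrier_matD(1)] f[THEN carrier_matD(2)]
    by (intro sum.cong) (auto simp: scalar_prod_def lessThan_atLeast0)
  finally show "(mat_sum nr nc f S * B) $$ (i,j) = mat_sum nr k (\<lambda>x. f x * B) S $$ (i,j)"
    using i j by simp
qed (use B in auto)

lemma mat_trace_mat_sum:
  assumes "\<And>x. x \<in> S \<Longrightarrow> f x \<in> carrier_mat n n"
  shows "mat_trace (mat_sum n n f S) = (\<Sum>x\<in>S. mat_trace (f x))"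
proof -
  have "mat_trace (mat_sum n n f S) = (\<Sum>i<n. \<Sum>x\<in>S. f x $$ (i,i))"
    unfolding mat_trace_def by simp
  also have "\<dots> = (\<Sum>x\<in>S. \<Sum>i<n. f x $$ (i,i))" by (rule sum.swap)
  finally show ?thesis unfolding mat_trace_def using assms by (auto intro!: sum.cong)
qed

lemma mat_trace_mult_comm:
  assumes A: "A \<in> carrier_mat n m" and B: "B \<in> carrier_mat m n"
  shows "mat_trace (A * B) = mat_trace (B * A)"
proof -
  have "mat_trace (A * B) = (\<Sum>i<n. \<Sum>l<m. A $$ (i,l) * B $$ (l,i))"
    unfolding mat_trace_def using A B by (auto simp: scalar_prod_def lessThan_atLeast0 intro!: sum.cong)
  also have "\<dots> = (\<Sum>l<m. \<Sum>i<n. B $$ (l,i) * A $$ (i,l))"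
    by (subst sum.swap) (simp add: mult.commute)
  also have "\<dots> = mat_trace (B * A)"
    unfolding mat_trace_def using A B by (auto simp: scalar_prod_def lessThan_atLeast0 intro!: sum.cong)
  finally show ?thesis .
qed

lemma mat_trace_similar:
  assumes A: "A \<in> carrier_mat n n" and P: "P \<in> carrier_mat n n" and Q: "Q \<in> carrier_mat n n"
    and QP: "Q * P = 1\<^sub>m n"
  shows "mat_trace (P * A * Q) = mat_trace A"
proof -
  have "mat_trace (P * A * Q) = mat_trace (P * (A * Q))" using A P Q by (simp add: assoc_mult_mat)
  also have "\<dots> = mat_trace ((A * Q) * P)" using A P Q by (intro mat_trace_mult_comm) auto
  also have "(A * Q) * P = A" using A P Q QP by (simp add: assoc_mult_mat)
  finally show ?thesis .
qed

lemma mat_trace_one [simp]: "mat_trace (1\<^sub>m n) = of_nat n"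
  unfolding mat_trace_def by simp

lemma mat_trace_smult: "A \<in> carrier_mat n n \<Longrightarrow> mat_trace (c \<cdot>\<^sub>m A) = c * mat_trace A"
  unfolding mat_trace_def by (auto simp: sum_distrib_left intro!: sum.cong)

lemma complex_mat_has_eigenvector:
  assumes T: "(T :: complex mat) \<in> carrier_mat n n" and n: "0 < n"
  obtains a v where "v \<in> carrier_vec n" "v \<noteq> 0\<^sub>v n" "T *\<^sub>v v = a \<cdot>\<^sub>v v"
proof -
  obtain as where cp: "char_poly T = (\<Prod>a\<leftarrow>as. [:- a, 1:])" and len: "length as = n"
    using char_poly_factorized[OF T] by blast
  then obtain a rest where "as = a # rest" using n by (cases as) auto
  hence "poly (char_poly T) a = 0" unfolding cp by simp
  hence "eigenvalue T a" using eigenvalue_root_char_poly[OF T] by simp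
  then obtain v where "eigenvector T v a" unfolding eigenvalue_def by blast
  thus ?thesis using that T unfolding eigenvector_def by auto
qed

lemma injective_mat_dim_le:
  assumes T: "(T :: 'a :: field mat) \<in> carrier_mat m n"
    and inj: "\<And>v. v \<in> carrier_vec n \<Longrightarrow> T *\<^sub>v v = 0\<^sub>v m \<Longrightarrow> v = 0\<^sub>v n"
  shows "n \<le> m"
proof (rule ccontr)
  assume "\<not> n \<le> m" hence mn: "m < n" by simp
  \<comment> \<open>pad the rows of \<open>T\<close> with zero rows to a singular square matrix\<close>
  define c where "c = (\<lambda>i. if i < m then row T i else 0\<^sub>v n)"
  define T' where "T' = mat\<^sub>r n n (\<lambda>i. if i = n - 1 then 0\<^sub>v n else c i)"
  have "c \<in> {0..<n} \<rightarrow> carrier_vec n" unfolding c_def using T by auto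
  hence "det T' = 0" unfolding T'_def by (intro det_row_0) (use mn in auto)
  moreover have T'c: "T' \<in> carrier_mat n n" unfolding T'_def by auto
  ultimately obtain v where v: "v \<in> carrier_vec n" "v \<noteq> 0\<^sub>v n" "T' *\<^sub>v v = 0\<^sub>v n"
    using det_0_iff_vec_prod_zero[OF T'c] by blast
  have "T *\<^sub>v v = 0\<^sub>v m"
  proof (rule eq_vecI)
    fix i assume "i < dim_vec (0\<^sub>v m :: 'a vec)" hence i: "i < m" by simp
    have "row T' i = row T i" using i mn T unfolding T'_def c_def
      by (auto simp: mat_of_rows_def intro!: eq_vecI)
    hence "(T' *\<^sub>v v) $ i = row T i \<bullet> v" using i mn T'c by simp
    thus "(T *\<^sub>v v) $ i = 0\<^sub>v m $ i" using v(3) i mn T by simp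
  qed (use T in auto)
  with inj v show False by auto
qed

lemma injective_square_mat_inverse:
  assumes T: "(T :: 'a :: field mat) \<in> carrier_mat n n"
    and inj: "\<And>v. v \<in> carrier_vec n \<Longrightarrow> T *\<^sub>v v = 0\<^sub>v n \<Longrightarrow> v = 0\<^sub>v n"
  obtains S where "S \<in> carrier_mat n n" "S * T = 1\<^sub>m n" "T * S = 1\<^sub>m n"
proof -
  have "det T \<noteq> 0" using det_0_iff_vec_prod_zero[OF T] inj by blast
  from det_non_zero_imp_unit[OF T this] show ?thesis
    using that unfolding Units_def ring_mat_def by auto
qed

lemma mat_eq_zeroI_mult_vec:
  fixes T :: "'a :: semiring_1 mat"
  assumes T: "T \<in> carrier_mat m n" and zero: "\<And>v. v \<in> carrier_vec n \<Longrightarrow> T *\<^sub>v v = 0\<^sub>v m"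
  shows "T = 0\<^sub>m m n"
proof (rule eq_matI)
  fix i j assume "i < dim_row (0\<^sub>m m n :: 'a mat)" "j < dim_col (0\<^sub>m m n :: 'a mat)"
  hence i: "i < m" and j: "j < n" by auto
  have "T $$ (i,j) = (T *\<^sub>v unit_vec n j) $ i" using T i j by simp
  thus "T $$ (i,j) = 0\<^sub>m m n $$ (i,j)" using zero[of "unit_vec n j"] i j by simp
qed (use T in auto)

definition single_entry_mat :: "nat \<Rightarrow> nat \<Rightarrow> nat \<Rightarrow> nat \<Rightarrow> 'a :: zero_neq_one mat" where
  "single_entry_mat m n j k = mat m n (\<lambda>(a,b). if a = j \<and> b = k then 1 else 0)"

lemma single_entry_mat_carrier [simp]: "single_entry_mat m n j k \<in> carrier_mat m n"
  and dim_single_entry_mat [simp]: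
    "dim_row (single_entry_mat m n j k) = m" "dim_col (single_entry_mat m n j k) = n"
  unfolding single_entry_mat_def by auto

lemma mat_trace_single_entry_mat:
  "j < n \<Longrightarrow> k < n \<Longrightarrow> mat_trace (single_entry_mat n n j k) = (if j = k then 1 else 0)"
  unfolding mat_trace_def single_entry_mat_def by (auto simp: sum.delta)

lemma index_mult_single_entry_mat:
  fixes S :: "'a :: comm_ring_1 mat"
  assumes S: "S \<in> carrier_mat m m" and R: "R \<in> carrier_mat n n" and j: "j < m" and k: "k < n"
  shows "(S * single_entry_mat m n j k * R) $$ (j,k) = S $$ (j,j) * R $$ (k,k)"
proof -
  have SE: "(S * single_entry_mat m n j k) $$ (j,b) = (if b = k then S $$ (j,j) else 0)"
    if "b < n" for b
  proof -
    have "(S * single_entry_mat m n j k) $$ (j,b)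
        = (\<Sum>a\<in>{0..<m}. S $$ (j,a) * (if a = j \<and> b = k then 1 else 0))"
      using S j that by (simp add: single_entry_mat_def scalar_prod_def)
    also have "\<dots> = (\<Sum>a\<in>{0..<m}. if a = j then (if b = k then S $$ (j,j) else 0) else 0)"
      by (intro sum.cong) auto
    finally show ?thesis using j by simp
  qed
  have "(S * single_entry_mat m n j k * R) $$ (j,k)
      = (\<Sum>b\<in>{0..<n}. (S * single_entry_mat m n j k) $$ (j,b) * R $$ (b,k))"
    using S R j k by (auto simp: scalar_prod_def intro!: sum.cong)
  also have "\<dots> = (\<Sum>b\<in>{0..<n}. if b = k then S $$ (j,j) * R $$ (k,k) else 0)"
    by (intro sum.cong) (auto simp: SE)
  finally show ?thesis using k by simp
qed

section \<open>Representations and Schur's lemma\<close>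

definition intertwines ::
    "('g, 'b) monoid_scheme \<Rightarrow> ('g \<Rightarrow> complex mat) \<Rightarrow> ('g \<Rightarrow> complex mat) \<Rightarrow> complex mat \<Rightarrow> bool" where
  "intertwines G \<rho> \<sigma> T \<longleftrightarrow> (\<forall>g \<in> carrier G. T * \<rho> g = \<sigma> g * T)"

lemma is_rep_carrier: "is_rep G n \<rho> \<Longrightarrow> g \<in> carrier G \<Longrightarrow> \<rho> g \<in> carrier_mat n n"
  and is_rep_mult: "is_rep G n \<rho> \<Longrightarrow> g \<in> carrier G \<Longrightarrow> h \<in> carrier G \<Longrightarrow> \<rho> (g \<otimes>\<^bsub>G\<^esub> h) = \<rho> g * \<rho> h"
  and is_rep_one: "is_rep G n \<rho> \<Longrightarrow> \<rho> \<one>\<^bsub>G\<^esub> = 1\<^sub>m n"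
  and is_rep_degree_pos: "is_rep G n \<rho> \<Longrightarrow> 0 < n"
  unfolding is_rep_def by auto

lemma is_irr_rep_is_rep: "is_irr_rep G n \<rho> \<Longrightarrow> is_rep G n \<rho>"
  unfolding is_irr_rep_def by simp

lemma character_eq_mat_trace: "g \<in> carrier G \<Longrightarrow> character G \<rho> g = mat_trace (\<rho> g)"
  and character_notin_carrier: "g \<notin> carrier G \<Longrightarrow> character G \<rho> g = 0"
  unfolding character_def by auto

lemma is_subspace_vec_mat_kernel:
  assumes T: "T \<in> carrier_mat m n"
  shows "is_subspace_vec n {v \<in> carrier_vec n. T *\<^sub>v v = 0\<^sub>v m}"
  unfolding is_subspace_vec_def
  using T by (auto simp: mult_add_distrib_mat_vec[OF T] mult_mat_vec[OF T])

text \<open>The kernel of an intertwiner out of an irreducible representation is invariant,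
  hence trivial unless the intertwiner vanishes.\<close>

lemma irr_rep_intertwiner_eq_zero:
  assumes irr: "is_irr_rep G n \<rho>" and T: "T \<in> carrier_mat m n"
    and \<sigma>: "\<And>g. g \<in> carrier G \<Longrightarrow> \<sigma> g \<in> carrier_mat m m" and int: "intertwines G \<rho> \<sigma> T"
    and v: "v \<in> carrier_vec n" "v \<noteq> 0\<^sub>v n" "T *\<^sub>v v = 0\<^sub>v m"
  shows "T = 0\<^sub>m m n"
proof -
  define K where "K = {v \<in> carrier_vec n. T *\<^sub>v v = 0\<^sub>v m}"
  have invariant: "\<rho> g *\<^sub>v u \<in> K" if g: "g \<in> carrier G" and u: "u \<in> K" for g u
  proof -
    have \<rho>g: "\<rho> g \<in> carrier_mat n n" using is_rep_carrier[OF is_irr_rep_is_rep[OF irr] g] .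
    have uc: "u \<in> carrier_vec n" and Tu: "T *\<^sub>v u = 0\<^sub>v m" using u unfolding K_def by auto
    have "T *\<^sub>v (\<rho> g *\<^sub>v u) = (\<sigma> g * T) *\<^sub>v u"
      using T \<rho>g uc int g unfolding intertwines_def by (simp flip: assoc_mult_mat_vec)
    also have "\<dots> = 0\<^sub>v m" using T \<sigma>[OF g] uc Tu by (auto intro!: eq_vecI simp: scalar_prod_def)
    finally show ?thesis unfolding K_def using \<rho>g uc by auto
  qed
  have "K = {0\<^sub>v n} \<or> K = carrier_vec n"
    using irr is_subspace_vec_mat_kernel[OF T] invariant unfolding is_irr_rep_def K_def by blast
  moreover have "v \<in> K" using v unfolding K_def by simp
  ultimately have "K = carrier_vec n" using v by auto
  thus ?thesis using mat_eq_zeroI_mult_vec[OF T] unfolding K_def by blast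
qed

theorem schur_lemma:
  assumes irr: "is_irr_rep G n \<rho>" and T: "T \<in> carrier_mat n n" and int: "intertwines G \<rho> \<rho> T"
  obtains c where "T = c \<cdot>\<^sub>m 1\<^sub>m n"
proof -
  have r: "is_rep G n \<rho>" using is_irr_rep_is_rep[OF irr] .
  obtain a v where v: "v \<in> carrier_vec n" "v \<noteq> 0\<^sub>v n" "T *\<^sub>v v = a \<cdot>\<^sub>v v"
    using complex_mat_has_eigenvector[OF T is_rep_degree_pos[OF r]] .
  define T' where "T' = T - a \<cdot>\<^sub>m 1\<^sub>m n"
  have T': "T' \<in> carrier_mat n n" unfolding T'_def by (simp add: minus_carrier_mat)
  have int': "intertwines G \<rho> \<rho> T'"
    unfolding intertwines_def T'_def
  proof
    fix g assume g: "g \<in> carrier G"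
    have \<rho>g: "\<rho> g \<in> carrier_mat n n" using is_rep_carrier[OF r g] .
    have "(T - a \<cdot>\<^sub>m 1\<^sub>m n) * \<rho> g = T * \<rho> g - a \<cdot>\<^sub>m \<rho> g"
      using T \<rho>g by (simp add: minus_mult_distrib_mat[of _ n n] mult_smult_assoc_mat[of _ n n])
    also have "\<dots> = \<rho> g * T - a \<cdot>\<^sub>m \<rho> g" using int g unfolding intertwines_def by simp
    also have "\<dots> = \<rho> g * (T - a \<cdot>\<^sub>m 1\<^sub>m n)"
      using T \<rho>g by (simp add: mult_minus_distrib_mat[of _ n n] mult_smult_distrib[OF \<rho>g one_carrier_mat])
    finally show "(T - a \<cdot>\<^sub>m 1\<^sub>m n) * \<rho> g = \<rho> g * (T - a \<cdot>\<^sub>m 1\<^sub>m n)" .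
  qed
  have "T' *\<^sub>v v = 0\<^sub>v n"
    unfolding T'_def using T v by (auto simp: minus_mult_distrib_mat_vec[of _ n n])
  with v have "T' = 0\<^sub>m n n"
    by (intro irr_rep_intertwiner_eq_zero[OF irr T' _ int']) (auto intro: is_rep_carrier[OF r])
  moreover have "T = T' + a \<cdot>\<^sub>m 1\<^sub>m n" unfolding T'_def using T by (intro eq_matI) auto
  ultimately have "T = a \<cdot>\<^sub>m 1\<^sub>m n" by simp
  thus ?thesis using that by blast
qed

context group
begin

lemma bij_betw_mult_left: "h \<in> carrier G \<Longrightarrow> bij_betw (\<lambda>g. h \<otimes> g) (carrier G) (carrier G)"
  by (rule bij_betw_byWitness[where f' = "\<lambda>g. inv h \<otimes> g"]) (auto simp: m_assoc[symmetric])

lemma bij_betw_inv: "bij_betw (\<lambda>g. inv g) (carrier G) (carrier G)"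
  by (rule bij_betw_byWitness[where f' = "\<lambda>g. inv g"]) auto

lemma sum_mult_inv_commute:
  fixes f h :: "'a \<Rightarrow> 'c :: comm_semiring_0"
  shows "(\<Sum>g\<in>carrier G. f g * h (inv g)) = (\<Sum>g\<in>carrier G. h g * f (inv g))"
  by (subst sum.reindex_bij_betw[OF bij_betw_inv, symmetric]) (simp add: mult.commute)

lemma is_rep_inv:
  assumes r: "is_rep G n \<rho>" and g: "g \<in> carrier G"
  shows "\<rho> (inv g) * \<rho> g = 1\<^sub>m n" "\<rho> g * \<rho> (inv g) = 1\<^sub>m n"
  using is_rep_mult[OF r, of "inv g" g] is_rep_mult[OF r, of g "inv g"] g is_rep_one[OF r] by simp_all

lemma character_one: "is_rep G n \<rho> \<Longrightarrow> character G \<rho> \<one> = of_nat n"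
  by (simp add: character_eq_mat_trace is_rep_one)

lemma character_conj:
  assumes r: "is_rep G n \<rho>" and x: "x \<in> carrier G" and g: "g \<in> carrier G"
  shows "character G \<rho> (x \<otimes> g \<otimes> inv x) = character G \<rho> g"
proof -
  have "\<rho> (x \<otimes> g \<otimes> inv x) = \<rho> x * \<rho> g * \<rho> (inv x)"
    using x g by (simp add: is_rep_mult[OF r])
  moreover have "mat_trace (\<rho> x * \<rho> g * \<rho> (inv x)) = mat_trace (\<rho> g)"
    using x g is_rep_carrier[OF r] is_rep_inv[OF r x] by (intro mat_trace_similar[of _ n]) auto
  ultimately show ?thesis using x g by (simp add: character_eq_mat_trace)
qed

section \<open>Orthogonality of irreducible characters\<close>

definition intertwiner_sum ::
    "('a \<Rightarrow> complex mat) \<Rightarrow> nat \<Rightarrow> ('a \<Rightarrow> complex mat) \<Rightarrow> nat \<Rightarrow> complex mat \<Rightarrow> complex mat" where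
  "intertwiner_sum \<sigma> m \<rho> n A = mat_sum m n (\<lambda>g. \<sigma> g * A * \<rho> (inv g)) (carrier G)"

lemma intertwiner_sum_carrier [simp]: "intertwiner_sum \<sigma> m \<rho> n A \<in> carrier_mat m n"
  unfolding intertwiner_sum_def by simp

lemma intertwiner_sum_intertwines:
  assumes s: "is_rep G m \<sigma>" and r: "is_rep G n \<rho>" and A: "A \<in> carrier_mat m n"
  shows "intertwines G \<rho> \<sigma> (intertwiner_sum \<sigma> m \<rho> n A)"
  unfolding intertwines_def
proof
  fix h assume h: "h \<in> carrier G"
  let ?term = "\<lambda>x y. \<sigma> x * A * \<rho> y"
  have c: "?term x y \<in> carrier_mat m n" if "x \<in> carrier G" "y \<in> carrier G" for x y
    using is_rep_carrier[OF s] is_rep_carrier[OF r] A that by (intro mult_carrier_mat) auto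
  have left: "\<sigma> h * ?term x y = ?term (h \<otimes> x) y" if "x \<in> carrier G" "y \<in> carrier G" for x y
  proof -
    have "\<sigma> h * ?term x y = \<sigma> h * (\<sigma> x * (A * \<rho> y))"
      using is_rep_carrier[OF s] is_rep_carrier[OF r] A that by (simp add: assoc_mult_mat[of _ m m _ n _ n])
    also have "\<dots> = (\<sigma> h * \<sigma> x) * (A * \<rho> y)"
      using is_rep_carrier[OF s] is_rep_carrier[OF r] A that h
      by (intro assoc_mult_mat[symmetric, of _ m m _ m _ n]) auto
    also have "\<dots> = (\<sigma> h * \<sigma> x) * A * \<rho> y"
      using is_rep_carrier[OF s] is_rep_carrier[OF r] A that h
      by (subst assoc_mult_mat[of "\<sigma> h * \<sigma> x" m m A n "\<rho> y" n]) (auto intro: mult_carrier_mat)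
    finally show ?thesis using is_rep_mult[OF s h \<open>x \<in> carrier G\<close>] by simp
  qed
  have right: "?term x y * \<rho> h = ?term x (y \<otimes> h)" if "x \<in> carrier G" "y \<in> carrier G" for x y
    using is_rep_carrier[OF s] is_rep_carrier[OF r] A that h
    by (simp add: is_rep_mult[OF r]) (subst assoc_mult_mat[of "\<sigma> x * A" m n]; auto intro: mult_carrier_mat)
  have "intertwiner_sum \<sigma> m \<rho> n A * \<rho> h = mat_sum m n (\<lambda>g. ?term g (inv g \<otimes> h)) (carrier G)"
    unfolding intertwiner_sum_def
    by (simp add: mult_mat_sum_right[OF is_rep_carrier[OF r h]] c right cong: mat_sum_cong)
  also have "\<dots> = mat_sum m n (\<lambda>g. ?term (h \<otimes> g) (inv g)) (carrier G)"
    using h by (subst mat_sum_reindex[OF bij_betw_mult_left[OF h]])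
      (auto intro!: mat_sum_cong simp: inv_mult_group m_assoc)
  also have "\<dots> = \<sigma> h * intertwiner_sum \<sigma> m \<rho> n A"
    unfolding intertwiner_sum_def
    by (simp add: mult_mat_sum_left[OF is_rep_carrier[OF s h]] c left cong: mat_sum_cong)
  finally show "intertwiner_sum \<sigma> m \<rho> n A * \<rho> h = \<sigma> h * intertwiner_sum \<sigma> m \<rho> n A" .
qed


lemma sum_character_mult_inv_eq_intertwiner_sum_entries:
  assumes s: "is_rep G m \<sigma>" and r: "is_rep G n \<rho>"
  shows "(\<Sum>g\<in>carrier G. character G \<sigma> g * character G \<rho> (inv g))
       = (\<Sum>j<m. \<Sum>k<n. intertwiner_sum \<sigma> m \<rho> n (single_entry_mat m n j k) $$ (j,k))"
proof -
  let ?f = "\<lambda>g j k. \<sigma> g $$ (j,j) * \<rho> (inv g) $$ (k,k)"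
  have entry: "intertwiner_sum \<sigma> m \<rho> n (single_entry_mat m n j k) $$ (j,k) = (\<Sum>g\<in>carrier G. ?f g j k)"
    if "j < m" "k < n" for j k
    unfolding intertwiner_sum_def using that is_rep_carrier[OF s] is_rep_carrier[OF r]
    by (auto intro!: sum.cong index_mult_single_entry_mat)
  have product: "character G \<sigma> g * character G \<rho> (inv g) = (\<Sum>j<m. \<Sum>k<n. ?f g j k)"
    if g: "g \<in> carrier G" for g
    using g is_rep_carrier[OF s g] is_rep_carrier[OF r, of "inv g"]
    by (simp add: character_eq_mat_trace mat_trace_def sum_product)
  have "(\<Sum>g\<in>carrier G. character G \<sigma> g * character G \<rho> (inv g))
      = (\<Sum>g\<in>carrier G. \<Sum>j<m. \<Sum>k<n. ?f g j k)"
    by (simp add: product)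
  also have "\<dots> = (\<Sum>j<m. \<Sum>g\<in>carrier G. \<Sum>k<n. ?f g j k)" by (rule sum.swap)
  also have "\<dots> = (\<Sum>j<m. \<Sum>k<n. \<Sum>g\<in>carrier G. ?f g j k)" by (intro sum.cong refl) (rule sum.swap)
  finally show ?thesis by (simp add: entry)
qed

text \<open>A nonzero pairing yields a nonzero entry of some averaged single-entry matrix, that is, a
  nonzero intertwiner, which is injective by irreducibility of \<open>\<rho>\<close>.\<close>

lemma character_pairing_nonzero_imp_embedding:
  assumes irr: "is_irr_rep G n \<rho>" and s: "is_rep G m \<sigma>"
    and nz: "(\<Sum>g\<in>carrier G. character G \<sigma> g * character G \<rho> (inv g)) \<noteq> 0"
  shows "\<exists>T \<in> carrier_mat m n. intertwines G \<rho> \<sigma> T \<and>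
           (\<forall>v \<in> carrier_vec n. T *\<^sub>v v = 0\<^sub>v m \<longrightarrow> v = 0\<^sub>v n)"
proof -
  have r: "is_rep G n \<rho>" using is_irr_rep_is_rep[OF irr] .
  obtain j k where j: "j < m" and k: "k < n"
    and e: "intertwiner_sum \<sigma> m \<rho> n (single_entry_mat m n j k) $$ (j,k) \<noteq> 0"
    using nz unfolding sum_character_mult_inv_eq_intertwiner_sum_entries[OF s r]
    by (meson lessThan_iff sum.not_neutral_contains_not_neutral)
  define T where "T = intertwiner_sum \<sigma> m \<rho> n (single_entry_mat m n j k)"
  have T: "T \<in> carrier_mat m n" unfolding T_def by simp
  have int: "intertwines G \<rho> \<sigma> T"
    unfolding T_def by (rule intertwiner_sum_intertwines[OF s r]) simp
  have "T \<noteq> 0\<^sub>m m n" using e j k unfolding T_def by auto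
  hence "v = 0\<^sub>v n" if "v \<in> carrier_vec n" "T *\<^sub>v v = 0\<^sub>v m" for v
    using irr_rep_intertwiner_eq_zero[where \<sigma> = \<sigma>, OF irr T is_rep_carrier[OF s] int that(1) _ that(2)]
    by blast
  with T int show ?thesis by blast
qed

theorem irr_character_orthogonal:
  assumes irr\<rho>: "is_irr_rep G n \<rho>" and irr\<sigma>: "is_irr_rep G m \<sigma>"
    and ne: "character G \<rho> \<noteq> character G \<sigma>"
  shows "(\<Sum>g\<in>carrier G. character G \<sigma> g * character G \<rho> (inv g)) = 0"
proof (rule ccontr)
  assume nz: "(\<Sum>g\<in>carrier G. character G \<sigma> g * character G \<rho> (inv g)) \<noteq> 0"
  have r: "is_rep G n \<rho>" and s: "is_rep G m \<sigma>" using irr\<rho> irr\<sigma> by (simp_all add: is_irr_rep_is_rep)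
  from character_pairing_nonzero_imp_embedding[OF irr\<rho> s nz] obtain T
    where T: "T \<in> carrier_mat m n" and int: "intertwines G \<rho> \<sigma> T"
      and inj: "\<forall>v \<in> carrier_vec n. T *\<^sub>v v = 0\<^sub>v m \<longrightarrow> v = 0\<^sub>v n"
    by blast
  have "(\<Sum>g\<in>carrier G. character G \<rho> g * character G \<sigma> (inv g)) \<noteq> 0"
    using nz sum_mult_inv_commute[of "character G \<sigma>" "character G \<rho>"] by simp
  from character_pairing_nonzero_imp_embedding[OF irr\<sigma> r this] obtain T' :: "complex mat"
    where "T' \<in> carrier_mat n m" and "\<forall>v \<in> carrier_vec m. T' *\<^sub>v v = 0\<^sub>v n \<longrightarrow> v = 0\<^sub>v m"
    by blast
  hence "m \<le> n" using injective_mat_dim_le[of T' n m] by blast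
  moreover have "n \<le> m" using injective_mat_dim_le[OF T] inj by blast
  ultimately have mn: "m = n" by simp
  obtain S where S: "S \<in> carrier_mat n n" and ST: "S * T = 1\<^sub>m n" and TS: "T * S = 1\<^sub>m n"
    using injective_square_mat_inverse[of T n] T inj mn by blast
  have "character G \<rho> g = character G \<sigma> g" for g
  proof (cases "g \<in> carrier G")
    case True
    have \<rho>g: "\<rho> g \<in> carrier_mat n n" and \<sigma>g: "\<sigma> g \<in> carrier_mat n n"
      using is_rep_carrier[OF r True] is_rep_carrier[OF s True] mn by auto
    have "T * \<rho> g * S = \<sigma> g * (T * S)" using int True T S \<sigma>g mn unfolding intertwines_def
      by (simp add: assoc_mult_mat)
    hence "\<sigma> g = T * \<rho> g * S" using TS \<sigma>g by simp
    thus ?thesis using True mat_trace_similar[OF \<rho>g _ S ST] T mn by (simp add: character_eq_mat_trace)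
  qed (simp add: character_notin_carrier)
  with ne show False by blast
qed

theorem irr_character_norm:
  assumes irr: "is_irr_rep G n \<rho>"
  shows "(\<Sum>g\<in>carrier G. character G \<rho> g * character G \<rho> (inv g)) = of_nat (card (carrier G))"
proof -
  have r: "is_rep G n \<rho>" using is_irr_rep_is_rep[OF irr] .
  have n: "0 < n" using is_rep_degree_pos[OF r] .
  have entry: "intertwiner_sum \<rho> n \<rho> n (single_entry_mat n n j k) $$ (j,k)
      = (if j = k then of_nat (card (carrier G)) / of_nat n else 0)"
    if j: "j < n" and k: "k < n" for j k
  proof -
    define T where "T = intertwiner_sum \<rho> n \<rho> n (single_entry_mat n n j k)"
    have T: "T \<in> carrier_mat n n" unfolding T_def by simp
    obtain c where c: "T = c \<cdot>\<^sub>m 1\<^sub>m n"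
      using schur_lemma[OF irr T] intertwiner_sum_intertwines[OF r r] unfolding T_def by auto
    have "mat_trace T = (\<Sum>g\<in>carrier G. mat_trace (\<rho> g * single_entry_mat n n j k * \<rho> (inv g)))"
      unfolding T_def intertwiner_sum_def
      by (rule mat_trace_mat_sum) (use is_rep_carrier[OF r] in \<open>auto intro!: mult_carrier_mat\<close>)
    also have "\<dots> = (\<Sum>g\<in>carrier G. mat_trace (single_entry_mat n n j k))"
      by (intro sum.cong refl mat_trace_similar) (use is_rep_carrier[OF r] is_rep_inv[OF r] in auto)
    finally have "c * of_nat n = of_nat (card (carrier G)) * (if j = k then 1 else 0)"
      using c j k by (simp add: mat_trace_smult[of _ n] mat_trace_single_entry_mat)
    hence "c = (if j = k then of_nat (card (carrier G)) / of_nat n else 0)"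
      using n by (auto simp: field_simps)
    thus ?thesis unfolding T_def[symmetric] c using j k by simp
  qed
  have "(\<Sum>g\<in>carrier G. character G \<rho> g * character G \<rho> (inv g))
      = (\<Sum>j<n. of_nat (card (carrier G)) / of_nat n)"
    unfolding sum_character_mult_inv_eq_intertwiner_sum_entries[OF r r]
    by (intro sum.cong refl) (simp add: entry sum.delta)
  also have "\<dots> = of_nat (card (carrier G))" using n by simp
  finally show ?thesis .
qed

end

lemma upper_triangular_mult:
  fixes B C :: "'a :: comm_ring_1 mat"
  assumes B: "B \<in> carrier_mat n n" and C: "C \<in> carrier_mat n n"
    and uB: "upper_triangular B" and uC: "upper_triangular C"
  shows "upper_triangular (B * C)" and "\<And>i. i < n \<Longrightarrow> (B * C) $$ (i,i) = B $$ (i,i) * C $$ (i,i)"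
proof -
  have zB: "B $$ (i,j) = 0" and zC: "C $$ (i,j) = 0" if "i < n" "j < i" for i j
    using uB uC B C that unfolding upper_triangular_def by auto
  have entry: "(B * C) $$ (i,j) = (\<Sum>l\<in>{0..<n}. B $$ (i,l) * C $$ (l,j))" if "i < n" "j < n" for i j
    using B C that by (auto simp: scalar_prod_def intro!: sum.cong)
  show "upper_triangular (B * C)"
  proof (rule upper_triangularI)
    fix i j assume j: "j < i" and "i < dim_row (B * C)"
    hence i: "i < n" using B by simp
    have "B $$ (i,l) * C $$ (l,j) = 0" if "l < n" for l
    proof (cases "l < i")
      case False
      thus ?thesis using zC[OF that, of j] j by simp
    qed (simp add: zB[OF i])
    thus "(B * C) $$ (i,j) = 0" using entry[of i j] i j by simp
  qed
  fix i assume i: "i < n"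
  have "B $$ (i,l) * C $$ (l,i) = (if l = i then B $$ (i,i) * C $$ (i,i) else 0)" if "l < n" for l
    using zB[OF i, of l] zC[OF that, of i] by (cases "l < i") auto
  hence "(B * C) $$ (i,i) = (\<Sum>l\<in>{0..<n}. if l = i then B $$ (i,i) * C $$ (i,i) else 0)"
    unfolding entry[OF i i] by (intro sum.cong) auto
  thus "(B * C) $$ (i,i) = B $$ (i,i) * C $$ (i,i)" using i by simp
qed

lemma upper_triangular_power:
  fixes B :: "'a :: comm_ring_1 mat"
  assumes B: "B \<in> carrier_mat n n" and uB: "upper_triangular B"
  shows "upper_triangular (B ^\<^sub>m k) \<and> (\<forall>i<n. (B ^\<^sub>m k) $$ (i,i) = (B $$ (i,i)) ^ k)"
proof (induction k)
  case (Suc k)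
  have "B ^\<^sub>m k \<in> carrier_mat n n" using B by simp
  from upper_triangular_mult[OF this B _ uB] Suc show ?case by (auto simp: mult.commute)
qed (use B in auto)

text \<open>The \<open>\<epsilon> i\<close> are the diagonal entries of a Schur triangularisation of \<open>A\<close>.\<close>

lemma finite_order_mat_eigenvalues:
  fixes A :: "complex mat"
  assumes A: "A \<in> carrier_mat n n" and Am: "A ^\<^sub>m m = 1\<^sub>m n"
  obtains \<epsilon> where "\<And>i. i < n \<Longrightarrow> \<epsilon> i ^ m = 1" "\<And>k. mat_trace (A ^\<^sub>m k) = (\<Sum>i<n. \<epsilon> i ^ k)"
proof -
  obtain es where cp: "char_poly A = (\<Prod>a\<leftarrow>es. [:- a, 1:])"
    using char_poly_factorized[OF A] by blast
  obtain B P Q where "schur_decomposition A es = (B,P,Q)" by (cases "schur_decomposition A es") auto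
  from schur_decomposition[OF A cp this] have sim: "similar_mat_wit A B P Q"
    and uB: "upper_triangular B" by auto
  have B: "B \<in> carrier_mat n n" and P: "P \<in> carrier_mat n n" and Q: "Q \<in> carrier_mat n n"
    and QP: "Q * P = 1\<^sub>m n"
    using sim A unfolding similar_mat_wit_def Let_def by auto
  have Ak: "A ^\<^sub>m k = P * B ^\<^sub>m k * Q" for k by (rule similar_mat_wit_pow_id[OF sim])
  have "mat_trace (A ^\<^sub>m k) = (\<Sum>i<n. B $$ (i,i) ^ k)" for k
    using mat_trace_similar[of "B ^\<^sub>m k" n P Q] B P Q QP upper_triangular_power[OF B uB, of k]
    unfolding Ak by (simp add: mat_trace_def)
  moreover have "B $$ (i,i) ^ m = 1" if "i < n" for i
  proof -
    have "B ^\<^sub>m m = Q * A ^\<^sub>m m * P"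
      by (rule similar_mat_wit_pow_id[OF similar_mat_wit_sym[OF sim]])
    also have "\<dots> = 1\<^sub>m n" using Am QP Q by simp
    finally show ?thesis using upper_triangular_power[OF B uB, of m] that by simp
  qed
  ultimately show ?thesis by (rule that[of "\<lambda>i. B $$ (i,i)", rotated])
qed

lemma root_of_unity_norm_and_inverse:
  fixes z :: complex
  assumes "z ^ m = 1" and "0 < m"
  shows "cmod z = 1" and "z ^ (m - 1) = cnj z"
proof -
  have "cmod z ^ m = 1" using assms(1) by (metis norm_one norm_power)
  thus norm: "cmod z = 1" using assms(2) power_eq_imp_eq_base[of "cmod z" m 1] by simp
  have "z ^ (m - 1) * z = 1" using assms by (metis Suc_diff_1 power_Suc2)
  moreover have "cnj z * z = 1" using norm complex_norm_square[of z] by (simp add: mult.commute)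
  moreover have "z \<noteq> 0" using norm by auto
  ultimately show "z ^ (m - 1) = cnj z" by (metis mult_right_cancel)
qed

context group
begin

lemma is_rep_pow: "is_rep G n \<rho> \<Longrightarrow> g \<in> carrier G \<Longrightarrow> \<rho> (g [^] (k::nat)) = \<rho> g ^\<^sub>m k"
  by (induction k) (simp_all add: is_rep_one is_rep_mult carrier_matD[OF is_rep_carrier])

theorem character_inv_eq_cnj:
  assumes fin: "finite (carrier G)" and r: "is_rep G n \<rho>" and g: "g \<in> carrier G"
  shows "character G \<rho> (inv g) = cnj (character G \<rho> g)"
    and "cmod (character G \<rho> g) \<le> of_nat n"
proof -
  define m where "m = Coset.order G"
  have m: "0 < m" unfolding m_def Coset.order_def using fin by (auto simp: card_gt_0_iff)
  have gm: "g [^] m = \<one>" unfolding m_def using pow_order_eq_1[OF g] .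
  have "g [^] (m - 1) \<otimes> g = \<one>" using m gm by (metis Suc_diff_1 nat_pow_Suc)
  hence invg: "inv g = g [^] (m - 1)" using g by (metis inv_equality nat_pow_closed)
  have A: "\<rho> g \<in> carrier_mat n n" using is_rep_carrier[OF r g] .
  have "\<rho> g ^\<^sub>m m = 1\<^sub>m n" using is_rep_pow[OF r g, of m] gm is_rep_one[OF r] by simp
  then obtain \<epsilon> where \<epsilon>: "\<And>i. i < n \<Longrightarrow> \<epsilon> i ^ m = 1"
    and tr: "\<And>k. mat_trace (\<rho> g ^\<^sub>m k) = (\<Sum>i<n. \<epsilon> i ^ k)"
    using finite_order_mat_eigenvalues[OF A] by blast
  have \<chi>: "character G \<rho> g = (\<Sum>i<n. \<epsilon> i)"
    using tr[of 1] A g by (simp add: character_eq_mat_trace)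
  have "character G \<rho> (inv g) = (\<Sum>i<n. \<epsilon> i ^ (m - 1))"
    using invg is_rep_pow[OF r g] g tr by (simp add: character_eq_mat_trace)
  also have "\<dots> = cnj (character G \<rho> g)"
    unfolding \<chi> using root_of_unity_norm_and_inverse(2)[OF \<epsilon> m] by simp
  finally show "character G \<rho> (inv g) = cnj (character G \<rho> g)" .
  have "cmod (character G \<rho> g) \<le> (\<Sum>i<n. cmod (\<epsilon> i))" unfolding \<chi> by (rule norm_sum)
  also have "\<dots> = of_nat n" using root_of_unity_norm_and_inverse(1)[OF \<epsilon> m] by simp
  finally show "cmod (character G \<rho> g) \<le> of_nat n" .
qed

lemma conj_mat_sum_intertwines:
  assumes r: "is_rep G n \<rho>" and g: "g \<in> carrier G"
  shows "intertwines G \<rho> \<rho> (mat_sum n n (\<lambda>x. \<rho> (x \<otimes> g \<otimes> inv x)) (carrier G))"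
  unfolding intertwines_def
proof
  fix h assume h: "h \<in> carrier G"
  have c: "\<rho> (x \<otimes> g \<otimes> inv x) \<in> carrier_mat n n" if "x \<in> carrier G" for x
    using is_rep_carrier[OF r] that g by auto
  have "mat_sum n n (\<lambda>x. \<rho> (x \<otimes> g \<otimes> inv x)) (carrier G) * \<rho> h
      = mat_sum n n (\<lambda>x. \<rho> (x \<otimes> g \<otimes> inv x \<otimes> h)) (carrier G)"
    by (subst mult_mat_sum_right[OF is_rep_carrier[OF r h] c])
      (auto intro!: mat_sum_cong simp: is_rep_mult[OF r] g h)
  also have "\<dots> = mat_sum n n (\<lambda>x. \<rho> ((h \<otimes> x) \<otimes> g \<otimes> inv (h \<otimes> x) \<otimes> h)) (carrier G)"
    by (rule mat_sum_reindex[OF bij_betw_mult_left[OF h]])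
  also have "\<dots> = mat_sum n n (\<lambda>x. \<rho> (h \<otimes> (x \<otimes> g \<otimes> inv x))) (carrier G)"
    using h g by (intro mat_sum_cong) (simp add: m_assoc inv_mult_group)
  also have "\<dots> = \<rho> h * mat_sum n n (\<lambda>x. \<rho> (x \<otimes> g \<otimes> inv x)) (carrier G)"
    by (subst mult_mat_sum_left[OF is_rep_carrier[OF r h] c])
      (auto intro!: mat_sum_cong simp: is_rep_mult[OF r] g h)
  finally show "mat_sum n n (\<lambda>x. \<rho> (x \<otimes> g \<otimes> inv x)) (carrier G) * \<rho> h
      = \<rho> h * mat_sum n n (\<lambda>x. \<rho> (x \<otimes> g \<otimes> inv x)) (carrier G)" .
qed

text \<open>By Schur's lemma the conjugation sum is the scalar \<open>|G| \<chi>(g) / \<chi>(1)\<close>.\<close>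

theorem character_conj_sum:
  assumes irr: "is_irr_rep G n \<rho>" and g: "g \<in> carrier G" and y: "y \<in> carrier G"
  shows "(\<Sum>x\<in>carrier G. character G \<rho> (x \<otimes> g \<otimes> inv x \<otimes> y))
       = of_nat (card (carrier G)) * character G \<rho> g * character G \<rho> y / of_nat n"
proof -
  have r: "is_rep G n \<rho>" using is_irr_rep_is_rep[OF irr] .
  define Z where "Z = mat_sum n n (\<lambda>x. \<rho> (x \<otimes> g \<otimes> inv x)) (carrier G)"
  have c: "\<rho> (x \<otimes> g \<otimes> inv x) \<in> carrier_mat n n" if "x \<in> carrier G" for x
    using is_rep_carrier[OF r] that g by auto
  obtain s where s: "Z = s \<cdot>\<^sub>m 1\<^sub>m n"
    using schur_lemma[OF irr _ conj_mat_sum_intertwines[OF r g]] unfolding Z_def by auto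
  have "s * of_nat n = mat_trace Z" using s by (simp add: mat_trace_smult[of _ n])
  also have "\<dots> = (\<Sum>x\<in>carrier G. character G \<rho> g)"
    unfolding Z_def using c g character_conj[OF r _ g]
    by (simp add: mat_trace_mat_sum character_eq_mat_trace)
  finally have sval: "s = of_nat (card (carrier G)) * character G \<rho> g / of_nat n"
    using is_rep_degree_pos[OF r] by (simp add: field_simps)
  have "(\<Sum>x\<in>carrier G. character G \<rho> (x \<otimes> g \<otimes> inv x \<otimes> y))
      = (\<Sum>x\<in>carrier G. mat_trace (\<rho> (x \<otimes> g \<otimes> inv x) * \<rho> y))"
    using g y by (intro sum.cong) (simp_all add: character_eq_mat_trace is_rep_mult[OF r])
  also have "\<dots> = mat_trace (mat_sum n n (\<lambda>x. \<rho> (x \<otimes> g \<otimes> inv x) * \<rho> y) (carrier G))"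
    using c is_rep_carrier[OF r y] by (intro mat_trace_mat_sum[symmetric] mult_carrier_mat) auto
  also have "\<dots> = mat_trace (Z * \<rho> y)"
    unfolding Z_def
    using mult_mat_sum_right[where f = "\<lambda>x. \<rho> (x \<otimes> g \<otimes> inv x)", OF is_rep_carrier[OF r y] c]
    by simp
  also have "\<dots> = s * character G \<rho> y"
    using is_rep_carrier[OF r y] y
    by (simp add: s mult_smult_assoc_mat[of _ n n _ n] mat_trace_smult[of _ n] character_eq_mat_trace)
  finally show ?thesis unfolding sval by simp
qed

end

section \<open>Invariant subspaces in coordinates\<close>

lemma vCons_add: "dim_vec u = dim_vec v \<Longrightarrow> vCons a u + vCons b v = vCons (a + b) (u + v)"
  by (intro eq_vecI) (auto simp: vec_index_vCons)

lemma smult_vCons: "c \<cdot>\<^sub>v vCons a u = vCons (c * a) (c \<cdot>\<^sub>v u)"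
  by (intro eq_vecI) (auto simp: vec_index_vCons)

lemma carrier_vec_SucE:
  assumes "v \<in> carrier_vec (Suc n)"
  obtains a u where "u \<in> carrier_vec n" "v = vCons a u"
  using assms by (cases v) auto

definition coord_subspace :: "nat \<Rightarrow> nat \<Rightarrow> 'a :: zero vec set" where
  "coord_subspace n k = {v \<in> carrier_vec n. \<forall>i < n - k. v $ i = 0}"

lemma coord_subspace_0: "coord_subspace n 0 = {0\<^sub>v n}"
  and coord_subspace_all: "coord_subspace n n = carrier_vec n"
  unfolding coord_subspace_def by (auto intro!: eq_vecI)

lemma coord_subspace_Suc_head:
  assumes "k \<le> n"
  shows "coord_subspace (Suc n) k = vCons 0 ` coord_subspace n k"
proof (intro equalityI subsetI)
  fix v assume v: "v \<in> coord_subspace (Suc n) k"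
  then obtain a u where u: "u \<in> carrier_vec n" and vu: "v = vCons a u"
    unfolding coord_subspace_def by (auto elim: carrier_vec_SucE)
  have zero: "vCons a u $ i = 0" if "i < Suc n - k" for i
    using v that unfolding vu coord_subspace_def by auto
  have "u $ i = 0" if "i < n - k" for i
    using zero[of "Suc i"] that assms by simp
  hence "u \<in> coord_subspace n k" using u unfolding coord_subspace_def by blast
  moreover have "a = 0" using zero[of 0] assms by simp
  ultimately show "v \<in> vCons 0 ` coord_subspace n k" using vu by simp
qed (use assms in \<open>auto simp: coord_subspace_def vec_index_vCons\<close>)

lemma coord_subspace_Suc_last:
  "v \<in> coord_subspace (Suc n) (Suc k) \<longleftrightarrow> v \<in> carrier_vec (Suc n) \<and> vec_first v n \<in> coord_subspace n k"
  unfolding coord_subspace_def vec_first_def by auto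

lemma mat_extend_head:
  fixes P' :: "'a :: comm_ring_1 mat"
  assumes P': "P' \<in> carrier_mat n n"
  obtains P where "P \<in> carrier_mat (Suc n) (Suc n)"
    "\<And>a u. u \<in> carrier_vec n \<Longrightarrow> P *\<^sub>v vCons a u = vCons a (P' *\<^sub>v u)"
proof
  define P where "P = mat (Suc n) (Suc n) (\<lambda>(i,j). if i = 0 then (if j = 0 then 1 else 0)
                    else if j = 0 then 0 else P' $$ (i - 1, j - 1))"
  show "P \<in> carrier_mat (Suc n) (Suc n)" unfolding P_def by simp
  fix a and u :: "'a vec" assume u: "u \<in> carrier_vec n"
  have row: "row P i = (if i = 0 then vCons 1 (0\<^sub>v n) else vCons 0 (row P' (i - 1)))"
    if "i < Suc n" for i
    using P' that unfolding P_def by (intro eq_vecI) (auto simp: vec_index_vCons)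
  show "P *\<^sub>v vCons a u = vCons a (P' *\<^sub>v u)"
  proof (rule eq_vecI)
    fix i assume "i < dim_vec (vCons a (P' *\<^sub>v u))"
    hence i: "i < Suc n" using P' by simp
    have "(P *\<^sub>v vCons a u) $ i = row P i \<bullet> vCons a u" using i unfolding P_def by simp
    thus "(P *\<^sub>v vCons a u) $ i = vCons a (P' *\<^sub>v u) $ i"
      using i P' u by (cases i) (simp_all add: row)
  qed (use P' in \<open>simp add: P_def\<close>)
qed

lemma mat_extend_last_column:
  fixes P' :: "'a :: comm_ring_1 mat"
  assumes P': "P' \<in> carrier_mat n n" and w: "w \<in> carrier_vec (Suc n)"
  obtains P where "P \<in> carrier_mat (Suc n) (Suc n)"
    "\<And>v. v \<in> carrier_vec (Suc n) \<Longrightarrow> P *\<^sub>v v = vCons 0 (P' *\<^sub>v vec_first v n) + v $ n \<cdot>\<^sub>v w"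
proof
  define P where "P = mat (Suc n) (Suc n) (\<lambda>(i,j). if j = n then w $ i else if i = 0 then 0 else P' $$ (i - 1, j))"
  show "P \<in> carrier_mat (Suc n) (Suc n)" unfolding P_def by simp
  fix v :: "'a vec" assume v: "v \<in> carrier_vec (Suc n)"
  show "P *\<^sub>v v = vCons 0 (P' *\<^sub>v vec_first v n) + v $ n \<cdot>\<^sub>v w"
  proof (rule eq_vecI)
    fix i assume "i < dim_vec (vCons 0 (P' *\<^sub>v vec_first v n) + v $ n \<cdot>\<^sub>v w)"
    hence i: "i < Suc n" using w by simp
    have "(P *\<^sub>v v) $ i = (\<Sum>j<Suc n. P $$ (i,j) * v $ j)"
      using i v unfolding P_def by (simp add: scalar_prod_def lessThan_atLeast0)
    also have "\<dots> = (\<Sum>j<n. P $$ (i,j) * v $ j) + w $ i * v $ n"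
      using i unfolding P_def by simp
    also have "(\<Sum>j<n. P $$ (i,j) * v $ j) = vCons 0 (P' *\<^sub>v vec_first v n) $ i"
    proof (cases i)
      case (Suc i')
      have "(\<Sum>j<n. P $$ (i,j) * v $ j) = (\<Sum>j<n. P' $$ (i', j) * v $ j)"
        unfolding P_def using Suc i by (intro sum.cong) auto
      thus ?thesis
        using P' Suc i by (simp add: scalar_prod_def vec_first_def lessThan_atLeast0)
    qed (simp add: P_def)
    finally show "(P *\<^sub>v v) $ i = (vCons 0 (P' *\<^sub>v vec_first v n) + v $ n \<cdot>\<^sub>v w) $ i"
      using i w P' by (simp add: mult.commute)
  qed (use w in \<open>simp add: P_def\<close>)
qed

lemma injective_extend_last_column:
  fixes P P' :: "'a :: comm_ring_1 mat"
  assumes P': "P' \<in> carrier_mat n n" and inj': "\<forall>v\<in>carrier_vec n. P' *\<^sub>v v = 0\<^sub>v n \<longrightarrow> v = 0\<^sub>v n"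
    and w: "w \<in> carrier_vec (Suc n)" "w $ 0 = 1"
    and Pv: "\<And>v. v \<in> carrier_vec (Suc n) \<Longrightarrow> P *\<^sub>v v = vCons 0 (P' *\<^sub>v vec_first v n) + v $ n \<cdot>\<^sub>v w"
    and v: "v \<in> carrier_vec (Suc n)" and Pv0: "P *\<^sub>v v = 0\<^sub>v (Suc n)"
  shows "v = 0\<^sub>v (Suc n)"
proof -
  have vn: "v $ n = 0" using arg_cong[OF Pv0, of "\<lambda>x. x $ 0"] Pv[OF v] w by simp
  moreover have "0 \<cdot>\<^sub>v w = 0\<^sub>v (Suc n)" using w by (intro eq_vecI) auto
  ultimately have "vCons 0 (P' *\<^sub>v vec_first v n) = vCons 0 (0\<^sub>v n)"
    using Pv0 Pv[OF v] P' by (simp add: zero_vec_Suc[symmetric])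
  hence "vec_first v n = 0\<^sub>v n" using inj' by simp
  hence "v $ i = 0" if "i < n" for i using that by (auto simp: vec_eq_iff vec_first_def)
  thus ?thesis using v vn by (intro eq_vecI) (auto simp: less_Suc_eq)
qed

lemma is_subspace_vec_vCons_slice:
  assumes "is_subspace_vec (Suc n) W"
  shows "is_subspace_vec n {u \<in> carrier_vec n. vCons 0 u \<in> W}"
proof -
  have "vCons 0 (u + v) = vCons 0 u + vCons (0 :: complex) v" if "u \<in> carrier_vec n" "v \<in> carrier_vec n" for u v
    using that by (simp add: vCons_add)
  moreover have "vCons 0 (c \<cdot>\<^sub>v u) = c \<cdot>\<^sub>v vCons (0 :: complex) u" for c u by (simp add: smult_vCons)
  ultimately show ?thesis using assms unfolding is_subspace_vec_def by (auto simp: zero_vec_Suc[symmetric])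
qed

lemma image_coord_subspace_head_zero:
  fixes P' :: "complex mat"
  assumes P': "P' \<in> carrier_mat n n" and inj': "\<forall>v\<in>carrier_vec n. P' *\<^sub>v v = 0\<^sub>v n \<longrightarrow> v = 0\<^sub>v n"
    and k: "k \<le> n" and slice: "{u \<in> carrier_vec n. vCons 0 u \<in> W} = (\<lambda>v. P' *\<^sub>v v) ` coord_subspace n k"
    and W: "W \<subseteq> carrier_vec (Suc n)" and head: "\<forall>v\<in>W. v $ 0 = 0"
  shows "\<exists>P \<in> carrier_mat (Suc n) (Suc n). (\<forall>v\<in>carrier_vec (Suc n). P *\<^sub>v v = 0\<^sub>v (Suc n) \<longrightarrow> v = 0\<^sub>v (Suc n))
           \<and> W = (\<lambda>v. P *\<^sub>v v) ` coord_subspace (Suc n) k"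
proof -
  obtain P where P: "P \<in> carrier_mat (Suc n) (Suc n)"
    and Pv: "\<And>a u. u \<in> carrier_vec n \<Longrightarrow> P *\<^sub>v vCons a u = vCons a (P' *\<^sub>v u)"
    using mat_extend_head[OF P'] by blast
  have inj: "v = 0\<^sub>v (Suc n)" if v: "v \<in> carrier_vec (Suc n)" and Pv0: "P *\<^sub>v v = 0\<^sub>v (Suc n)" for v
  proof -
    obtain a u where u: "u \<in> carrier_vec n" and vu: "v = vCons a u" using carrier_vec_SucE[OF v] .
    hence "a = 0" "P' *\<^sub>v u = 0\<^sub>v n" using Pv0 by (simp_all add: Pv zero_vec_Suc)
    thus ?thesis using inj' u vu by (simp add: zero_vec_Suc)
  qed
  have "W = vCons 0 ` {u \<in> carrier_vec n. vCons 0 u \<in> W}"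
  proof (intro equalityI subsetI)
    fix v assume v: "v \<in> W"
    then obtain a u where "u \<in> carrier_vec n" and "v = vCons a u"
      using W carrier_vec_SucE by blast
    thus "v \<in> vCons 0 ` {u \<in> carrier_vec n. vCons 0 u \<in> W}" using v head by force
  qed auto
  also have "\<dots> = (\<lambda>v. P *\<^sub>v v) ` vCons 0 ` coord_subspace n k"
    unfolding slice image_image using Pv by (intro image_cong) (auto simp: coord_subspace_def)
  also have "\<dots> = (\<lambda>v. P *\<^sub>v v) ` coord_subspace (Suc n) k"
    by (simp add: coord_subspace_Suc_head[OF k])
  finally show ?thesis using P inj by blast
qed

text \<open>\<open>W\<close> is spanned by the slice and \<open>w\<close>, which becomes the last basis vector.\<close>

lemma image_coord_subspace_add_line:
  fixes P' :: "complex mat"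
  assumes P': "P' \<in> carrier_mat n n" and inj': "\<forall>v\<in>carrier_vec n. P' *\<^sub>v v = 0\<^sub>v n \<longrightarrow> v = 0\<^sub>v n"
    and slice: "{u \<in> carrier_vec n. vCons 0 u \<in> W} = (\<lambda>v. P' *\<^sub>v v) ` coord_subspace n k"
    and sub: "is_subspace_vec (Suc n) W" and w: "w \<in> W" "w $ 0 = 1"
  shows "\<exists>P \<in> carrier_mat (Suc n) (Suc n). (\<forall>v\<in>carrier_vec (Suc n). P *\<^sub>v v = 0\<^sub>v (Suc n) \<longrightarrow> v = 0\<^sub>v (Suc n))
           \<and> W = (\<lambda>v. P *\<^sub>v v) ` coord_subspace (Suc n) (Suc k)"
proof -
  have W: "W \<subseteq> carrier_vec (Suc n)" and Wadd: "\<And>x y. x \<in> W \<Longrightarrow> y \<in> W \<Longrightarrow> x + y \<in> W"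
    and Wsmult: "\<And>c x. x \<in> W \<Longrightarrow> c \<cdot>\<^sub>v x \<in> W"
    using sub unfolding is_subspace_vec_def by blast+
  have wc: "w \<in> carrier_vec (Suc n)" using w W by blast
  obtain P where P: "P \<in> carrier_mat (Suc n) (Suc n)" and Pv: "\<And>v. v \<in> carrier_vec (Suc n) \<Longrightarrow>
      P *\<^sub>v v = vCons 0 (P' *\<^sub>v vec_first v n) + v $ n \<cdot>\<^sub>v w"
    using mat_extend_last_column[OF P' wc] by blast
  have "v = 0\<^sub>v (Suc n)" if "v \<in> carrier_vec (Suc n)" "P *\<^sub>v v = 0\<^sub>v (Suc n)" for v
    using injective_extend_last_column[OF P' inj' wc w(2) Pv that] .
  moreover have "W = (\<lambda>v. P *\<^sub>v v) ` coord_subspace (Suc n) (Suc k)"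
  proof (intro equalityI subsetI)
    fix x assume x: "x \<in> W"
    define y where "y = x + (- (x $ 0)) \<cdot>\<^sub>v w"
    have "y \<in> W" unfolding y_def using x w Wadd Wsmult by blast
    moreover have "y $ 0 = 0" unfolding y_def using x W wc w(2) by auto
    ultimately obtain u' where u': "u' \<in> carrier_vec n" "vCons 0 u' \<in> W" and yu: "y = vCons 0 u'"
      using W carrier_vec_SucE by (metis subsetD vec_index_vCons_0)
    then obtain u where u: "u \<in> coord_subspace n k" and u'u: "u' = P' *\<^sub>v u" using slice by blast
    define v where "v = vec (Suc n) (\<lambda>i. if i < n then u $ i else x $ 0)"
    have "v \<in> coord_subspace (Suc n) (Suc k)" and "vec_first v n = u"
      using u unfolding coord_subspace_Suc_last unfolding coord_subspace_def v_def vec_first_def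
      by (auto intro!: eq_vecI)
    moreover have "P *\<^sub>v v = y + x $ 0 \<cdot>\<^sub>v w"
      using Pv[of v] \<open>vec_first v n = u\<close> yu u'u by (simp add: v_def)
    moreover have "y + x $ 0 \<cdot>\<^sub>v w = x" unfolding y_def using x W wc by (intro eq_vecI) auto
    ultimately show "x \<in> (\<lambda>v. P *\<^sub>v v) ` coord_subspace (Suc n) (Suc k)" by force
  next
    fix x assume "x \<in> (\<lambda>v. P *\<^sub>v v) ` coord_subspace (Suc n) (Suc k)"
    then obtain v where v: "v \<in> coord_subspace (Suc n) (Suc k)" and x: "x = P *\<^sub>v v" by blast
    hence "P' *\<^sub>v vec_first v n \<in> {u \<in> carrier_vec n. vCons 0 u \<in> W}"
      unfolding slice coord_subspace_Suc_last by blast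
    thus "x \<in> W" using x v Pv Wadd Wsmult w(1) unfolding coord_subspace_Suc_last by auto
  qed
  ultimately show ?thesis using P by blast
qed

theorem subspace_eq_image_coord_subspace:
  fixes W :: "complex vec set"
  assumes "is_subspace_vec n W"
  shows "\<exists>P \<in> carrier_mat n n. (\<forall>v\<in>carrier_vec n. P *\<^sub>v v = 0\<^sub>v n \<longrightarrow> v = 0\<^sub>v n)
           \<and> (\<exists>k \<le> n. W = (\<lambda>v. P *\<^sub>v v) ` coord_subspace n k)"
  using assms
proof (induction n arbitrary: W)
  case 0
  moreover have "x = 0\<^sub>v 0" if "x \<in> carrier_vec 0" for x :: "complex vec"
    using that by (intro eq_vecI) auto
  ultimately have "W = {0\<^sub>v 0}" unfolding is_subspace_vec_def by blast
  thus ?case by (intro bexI[of _ "1\<^sub>m 0"]) (auto simp: coord_subspace_0)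
next
  case (Suc n)
  from Suc.IH[OF is_subspace_vec_vCons_slice[OF Suc.prems]] obtain P' k
    where P': "P' \<in> carrier_mat n n" and inj': "\<forall>v\<in>carrier_vec n. P' *\<^sub>v v = 0\<^sub>v n \<longrightarrow> v = 0\<^sub>v n"
      and k: "k \<le> n" and slice: "{u \<in> carrier_vec n. vCons 0 u \<in> W} = (\<lambda>v. P' *\<^sub>v v) ` coord_subspace n k"
    by blast
  show ?case
  proof (cases "\<forall>v\<in>W. v $ 0 = 0")
    case True
    have "W \<subseteq> carrier_vec (Suc n)" using Suc.prems unfolding is_subspace_vec_def by blast
    from image_coord_subspace_head_zero[OF P' inj' k slice this True] le_SucI[OF k]
    show ?thesis by blast
  next
    case False
    then obtain w where w: "w \<in> W" "w $ 0 \<noteq> 0" by blast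
    have "(1 / w $ 0) \<cdot>\<^sub>v w \<in> W" "((1 / w $ 0) \<cdot>\<^sub>v w) $ 0 = 1"
      using Suc.prems w unfolding is_subspace_vec_def by auto
    from image_coord_subspace_add_line[OF P' inj' slice Suc.prems this] Suc_le_mono[THEN iffD2, OF k]
    show ?thesis by blast
  qed
qed

section \<open>Decomposition of characters into irreducible ones\<close>

lemma is_rep_similar:
  assumes r: "is_rep G n \<rho>" and P: "P \<in> carrier_mat n n" and S: "S \<in> carrier_mat n n"
    and SP: "S * P = 1\<^sub>m n" and PS: "P * S = 1\<^sub>m n"
  shows "is_rep G n (\<lambda>g. S * \<rho> g * P)"
    and "character G (\<lambda>g. S * \<rho> g * P) = character G \<rho>"
proof -
  have "S * \<rho> (g \<otimes>\<^bsub>G\<^esub> h) * P = (S * \<rho> g * P) * (S * \<rho> h * P)"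
    if g: "g \<in> carrier G" and h: "h \<in> carrier G" for g h
  proof -
    have \<rho>g: "\<rho> g \<in> carrier_mat n n" and \<rho>h: "\<rho> h \<in> carrier_mat n n"
      using is_rep_carrier[OF r] g h by auto
    have "(S * \<rho> g * P) * (S * \<rho> h * P) = S * \<rho> g * ((P * S) * \<rho> h * P)"
      using S P \<rho>g \<rho>h by (simp add: assoc_mult_mat[of _ n n _ n _ n])
    also have "\<dots> = S * (\<rho> g * \<rho> h) * P"
      using S P \<rho>g \<rho>h PS by (simp add: assoc_mult_mat[of _ n n _ n _ n])
    finally show ?thesis using is_rep_mult[OF r g h] by simp
  qed
  thus "is_rep G n (\<lambda>g. S * \<rho> g * P)"
    using r S P SP unfolding is_rep_def by auto
  show "character G (\<lambda>g. S * \<rho> g * P) = character G \<rho>"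
    using mat_trace_similar[OF is_rep_carrier[OF r] S P PS] unfolding character_def by auto
qed

lemma sum_lessThan_add:
  fixes f :: "nat \<Rightarrow> 'a :: comm_monoid_add"
  shows "(\<Sum>l<a + k. f l) = (\<Sum>l<a. f l) + (\<Sum>l<k. f (a + l))"
  by (induction k) (auto simp: add_ac)

lemma index_mult_block_lower_triangular:
  fixes X Y :: "'a :: comm_ring_1 mat"
  assumes X: "X \<in> carrier_mat (a + k) (a + k)" and Y: "Y \<in> carrier_mat (a + k) (a + k)"
    and zX: "\<And>i j. i < a \<Longrightarrow> a \<le> j \<Longrightarrow> j < a + k \<Longrightarrow> X $$ (i,j) = 0"
    and zY: "\<And>i j. i < a \<Longrightarrow> a \<le> j \<Longrightarrow> j < a + k \<Longrightarrow> Y $$ (i,j) = 0"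
  shows "\<And>i j. i < a \<Longrightarrow> j < a \<Longrightarrow> (X * Y) $$ (i,j) = (\<Sum>l<a. X $$ (i,l) * Y $$ (l,j))"
    and "\<And>i j. i < k \<Longrightarrow> j < k \<Longrightarrow> (X * Y) $$ (a+i,a+j) = (\<Sum>l<k. X $$ (a+i,a+l) * Y $$ (a+l,a+j))"
proof -
  have prod: "(X * Y) $$ (i,j) = (\<Sum>l<a. X $$ (i,l) * Y $$ (l,j)) + (\<Sum>l<k. X $$ (i,a+l) * Y $$ (a+l,j))"
    if "i < a + k" "j < a + k" for i j
  proof -
    have "(X * Y) $$ (i,j) = (\<Sum>l<a + k. X $$ (i,l) * Y $$ (l,j))"
      using X Y that by (simp add: scalar_prod_def lessThan_atLeast0)
    thus ?thesis by (simp only: sum_lessThan_add)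
  qed
  show "(X * Y) $$ (i,j) = (\<Sum>l<a. X $$ (i,l) * Y $$ (l,j))" if "i < a" "j < a" for i j
    using prod[of i j] zX that by simp
  show "(X * Y) $$ (a+i,a+j) = (\<Sum>l<k. X $$ (a+i,a+l) * Y $$ (a+l,a+j))" if "i < k" "j < k" for i j
    using prod[of "a+i" "a+j"] zY that by simp
qed

lemma is_rep_diagonal_blocks:
  assumes \<tau>: "is_rep G (a + k) \<tau>" and a: "0 < a" and k: "0 < k"
    and zero: "\<And>g i j. g \<in> carrier G \<Longrightarrow> i < a \<Longrightarrow> a \<le> j \<Longrightarrow> j < a + k \<Longrightarrow> \<tau> g $$ (i,j) = 0"
  defines "\<tau>1 \<equiv> \<lambda>g. mat a a (\<lambda>(i,j). \<tau> g $$ (i,j))"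
    and "\<tau>2 \<equiv> \<lambda>g. mat k k (\<lambda>(i,j). \<tau> g $$ (a+i,a+j))"
  shows "is_rep G a \<tau>1" and "is_rep G k \<tau>2"
    and "\<And>g. g \<in> carrier G \<Longrightarrow> character G \<tau> g = character G \<tau>1 g + character G \<tau>2 g"
proof -
  note mult = index_mult_block_lower_triangular[OF is_rep_carrier[OF \<tau>] is_rep_carrier[OF \<tau>] zero zero]
  have \<tau>mult: "\<tau> (g \<otimes>\<^bsub>G\<^esub> h) = \<tau> g * \<tau> h" if "g \<in> carrier G" "h \<in> carrier G" for g h
    using is_rep_mult[OF \<tau>] that by blast
  show "is_rep G a \<tau>1"
    unfolding is_rep_def \<tau>1_def using a is_rep_one[OF \<tau>]
    by (auto intro!: eq_matI simp: \<tau>mult mult scalar_prod_def lessThan_atLeast0)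
  show "is_rep G k \<tau>2"
    unfolding is_rep_def \<tau>2_def using k is_rep_one[OF \<tau>]
    by (auto intro!: eq_matI simp: \<tau>mult mult scalar_prod_def lessThan_atLeast0)
  show "character G \<tau> g = character G \<tau>1 g + character G \<tau>2 g" if "g \<in> carrier G" for g
    using that is_rep_carrier[OF \<tau> that]
    by (simp add: \<tau>1_def \<tau>2_def character_eq_mat_trace mat_trace_def sum_lessThan_add)
qed

lemma similar_mat_upper_right_block_zero:
  fixes A :: "complex mat"
  assumes A: "A \<in> carrier_mat n n" and P: "P \<in> carrier_mat n n" and S: "S \<in> carrier_mat n n"
    and SP: "S * P = 1\<^sub>m n"
    and inv: "\<And>v. v \<in> coord_subspace n k \<Longrightarrow> A *\<^sub>v (P *\<^sub>v v) \<in> (\<lambda>v. P *\<^sub>v v) ` coord_subspace n k"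
    and ij: "i < n - k" "n - k \<le> j" "j < n"
  shows "(S * A * P) $$ (i,j) = 0"
proof -
  have "unit_vec n j \<in> coord_subspace n k" using ij unfolding coord_subspace_def by auto
  then obtain u where u: "u \<in> coord_subspace n k" and Au: "A *\<^sub>v (P *\<^sub>v unit_vec n j) = P *\<^sub>v u"
    using inv by blast
  have "(S * A * P) *\<^sub>v unit_vec n j = S *\<^sub>v (P *\<^sub>v u)"
    using S P A unfolding Au[symmetric] by (simp add: assoc_mult_mat_vec[of _ n n _ n])
  also have "\<dots> = u" using S P SP u by (simp add: assoc_mult_mat_vec[symmetric] coord_subspace_def)
  finally have "((S * A * P) *\<^sub>v unit_vec n j) $ i = u $ i" by simp
  moreover have "((S * A * P) *\<^sub>v unit_vec n j) $ i = (S * A * P) $$ (i,j)" using S A P ij by simp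
  moreover have "u $ i = 0" using u ij unfolding coord_subspace_def by auto
  ultimately show ?thesis by simp
qed

text \<open>In a basis adapted to an invariant subspace \<open>W\<close> the representation becomes block triangular.\<close>

theorem reducible_rep_character_split:
  assumes r: "is_rep G n \<rho>" and red: "\<not> is_irr_rep G n \<rho>"
  obtains n1 \<rho>1 n2 \<rho>2 where "is_rep G n1 \<rho>1" "is_rep G n2 \<rho>2" "n1 < n" "n2 < n"
    "\<And>g. g \<in> carrier G \<Longrightarrow> character G \<rho> g = character G \<rho>1 g + character G \<rho>2 g"
proof -
  obtain W where sub: "is_subspace_vec n W" and inv: "\<forall>g\<in>carrier G. \<forall>v\<in>W. \<rho> g *\<^sub>v v \<in> W"
    and W0: "W \<noteq> {0\<^sub>v n}" and Wall: "W \<noteq> carrier_vec n"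
    using r red unfolding is_irr_rep_def by blast
  obtain P k where P: "P \<in> carrier_mat n n" and inj: "\<forall>v\<in>carrier_vec n. P *\<^sub>v v = 0\<^sub>v n \<longrightarrow> v = 0\<^sub>v n"
    and k: "k \<le> n" and Weq: "W = (\<lambda>v. P *\<^sub>v v) ` coord_subspace n k"
    using subspace_eq_image_coord_subspace[OF sub] by blast
  obtain S where S: "S \<in> carrier_mat n n" and SP: "S * P = 1\<^sub>m n" and PS: "P * S = 1\<^sub>m n"
    using injective_square_mat_inverse[OF P] inj by blast
  have k_ne_0: "k \<noteq> 0"
  proof
    assume "k = 0"
    hence "W = {P *\<^sub>v 0\<^sub>v n}" using Weq by (simp add: coord_subspace_0)
    also have "P *\<^sub>v 0\<^sub>v n = 0\<^sub>v n" using P by (intro eq_vecI) auto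
    finally show False using W0 by simp
  qed
  have k_ne_n: "k \<noteq> n"
  proof
    assume "k = n"
    hence "x \<in> W" if "x \<in> carrier_vec n" for x
      using Weq S P PS that by (auto simp: coord_subspace_all image_iff assoc_mult_mat_vec[symmetric]
          intro!: bexI[of _ "S *\<^sub>v x"])
    thus False using Wall sub unfolding is_subspace_vec_def by blast
  qed
  define a where "a = n - k"
  have nak: "n = a + k" and a: "0 < a" "a < n" and k0: "0 < k"
    using k k_ne_0 k_ne_n unfolding a_def by auto
  define \<tau> where "\<tau> = (\<lambda>g. S * \<rho> g * P)"
  have \<tau>: "is_rep G (a + k) \<tau>" and ch\<tau>: "character G \<tau> = character G \<rho>"
    using is_rep_similar[OF r P S SP PS] nak unfolding \<tau>_def by auto
  have inv': "\<rho> g *\<^sub>v (P *\<^sub>v v) \<in> (\<lambda>v. P *\<^sub>v v) ` coord_subspace n k"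
    if "g \<in> carrier G" "v \<in> coord_subspace n k" for g v
    using inv that unfolding Weq by blast
  have "\<tau> g $$ (i,j) = 0" if g: "g \<in> carrier G" and "i < a" "a \<le> j" "j < a + k" for g i j
    using similar_mat_upper_right_block_zero[OF is_rep_carrier[OF r g] P S SP inv'[OF g]] that nak
    unfolding \<tau>_def a_def by simp
  note blocks = is_rep_diagonal_blocks[OF \<tau> a(1) k0 this]
  show thesis
  proof (rule that[OF blocks(1,2) a(2)])
    show "k < n" using nak a by simp
    fix g assume "g \<in> carrier G"
    thus "character G \<rho> g = character G (\<lambda>g. mat a a (\<lambda>(i,j). \<tau> g $$ (i,j))) g
        + character G (\<lambda>g. mat k k (\<lambda>(i,j). \<tau> g $$ (a + i, a + j))) g"
      using blocks(3) ch\<tau> by simp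
  qed
qed

theorem character_eq_sum_Irr:
  assumes "is_rep G n \<rho>"
  shows "\<exists>M. set_mset M \<subseteq> Irr G \<and> (\<forall>g\<in>carrier G. character G \<rho> g = (\<Sum>\<chi>\<in>#M. \<chi> g))"
  using assms
proof (induction n arbitrary: \<rho> rule: less_induct)
  case (less n)
  show ?case
  proof (cases "is_irr_rep G n \<rho>")
    case True
    hence "character G \<rho> \<in> Irr G" unfolding Irr_def by blast
    thus ?thesis by (intro exI[of _ "{#character G \<rho>#}"]) auto
  next
    case False
    then obtain n1 \<rho>1 n2 \<rho>2 where r1: "is_rep G n1 \<rho>1" and r2: "is_rep G n2 \<rho>2"
      and "n1 < n" "n2 < n"
      and split: "\<And>g. g \<in> carrier G \<Longrightarrow> character G \<rho> g = character G \<rho>1 g + character G \<rho>2 g"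
      using reducible_rep_character_split[OF less.prems] by metis
    with less.IH obtain M1 M2 where "set_mset M1 \<subseteq> Irr G" "set_mset M2 \<subseteq> Irr G"
      "\<forall>g\<in>carrier G. character G \<rho>1 g = (\<Sum>\<chi>\<in>#M1. \<chi> g)"
      "\<forall>g\<in>carrier G. character G \<rho>2 g = (\<Sum>\<chi>\<in>#M2. \<chi> g)"
      by meson
    thus ?thesis using split by (intro exI[of _ "M1 + M2"]) auto
  qed
qed

lemma is_irr_rep_degree_one:
  assumes r: "is_rep G 1 \<rho>"
  shows "is_irr_rep G 1 \<rho>"
  unfolding is_irr_rep_def
proof (intro conjI r allI impI)
  fix W assume "is_subspace_vec 1 W \<and> (\<forall>g\<in>carrier G. \<forall>v\<in>W. \<rho> g *\<^sub>v v \<in> W)"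
  hence W: "W \<subseteq> carrier_vec 1" and W0: "0\<^sub>v 1 \<in> W" and Wsmult: "\<And>c v. v \<in> W \<Longrightarrow> c \<cdot>\<^sub>v v \<in> W"
    unfolding is_subspace_vec_def by auto
  show "W = {0\<^sub>v 1} \<or> W = carrier_vec 1"
  proof (cases "W = {0\<^sub>v 1}")
    case False
    then obtain v where v: "v \<in> W" "v \<noteq> 0\<^sub>v 1" using W0 by auto
    have v0: "v $ 0 \<noteq> 0"
    proof
      assume "v $ 0 = 0"
      hence "v = 0\<^sub>v 1" using v W by (intro eq_vecI) auto
      thus False using v by simp
    qed
    have "u \<in> W" if u: "u \<in> carrier_vec 1" for u
    proof -
      have "u = (u $ 0 / v $ 0) \<cdot>\<^sub>v v" using u v W v0 by (intro eq_vecI) auto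
      thus ?thesis using Wsmult[OF v(1)] by metis
    qed
    thus ?thesis using W by auto
  qed simp
qed

lemma trivial_character_in_Irr: "(\<lambda>g. if g \<in> carrier G then 1 else 0) \<in> Irr G"
proof -
  have "is_rep G 1 (\<lambda>_. 1\<^sub>m 1)" unfolding is_rep_def by auto
  moreover have "character G (\<lambda>_. 1\<^sub>m 1) = (\<lambda>g. if g \<in> carrier G then 1 else 0)"
    unfolding character_def by auto
  ultimately show ?thesis unfolding Irr_def using is_irr_rep_degree_one by fastforce
qed

lemma IrrE:
  assumes "\<chi> \<in> Irr G"
  obtains n \<rho> where "is_irr_rep G n \<rho>" "\<chi> = character G \<rho>"
  using assms unfolding Irr_def by blast

context group
begin

lemma Irr_degree:
  assumes "\<chi> \<in> Irr G"
  obtains n where "0 < n" "\<chi> \<one> = of_nat n"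
  using assms by (elim IrrE) (metis character_one is_irr_rep_is_rep is_rep_degree_pos)

lemma Irr_orthogonality:
  assumes "\<chi> \<in> Irr G" and "\<psi> \<in> Irr G"
  shows "(\<Sum>g\<in>carrier G. \<chi> g * \<psi> (inv g)) = (if \<chi> = \<psi> then of_nat (card (carrier G)) else 0)"
  using assms irr_character_norm irr_character_orthogonal by (elim IrrE) auto

lemma regular_rep_exists:
  assumes fin: "finite (carrier G)"
  obtains \<rho> where "is_rep G (card (carrier G)) \<rho>"
    "\<And>g. g \<in> carrier G \<Longrightarrow> character G \<rho> g = (if g = \<one> then of_nat (card (carrier G)) else 0)"
proof -
  define N where "N = card (carrier G)"
  obtain e where e: "bij_betw e {0..<N} (carrier G)"
    unfolding N_def using ex_bij_betw_nat_finite[OF fin] by blast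
  have e_inj: "\<And>i j. i < N \<Longrightarrow> j < N \<Longrightarrow> e i = e j \<longleftrightarrow> i = j"
    and e_carrier: "\<And>i. i < N \<Longrightarrow> e i \<in> carrier G"
    using e unfolding bij_betw_def inj_on_def by auto
  have e_surj: "\<And>x. x \<in> carrier G \<Longrightarrow> \<exists>l<N. e l = x"
    using bij_betw_imp_surj_on[OF e] by force
  \<comment> \<open>the permutation matrix of left multiplication by \<open>g\<close> in the basis indexed by \<open>e\<close>\<close>
  define \<rho> where "\<rho> = (\<lambda>g. mat N N (\<lambda>(i,j). if e i = g \<otimes> e j then (1::complex) else 0))"
  have "\<rho> (g \<otimes> h) = \<rho> g * \<rho> h" if g: "g \<in> carrier G" and h: "h \<in> carrier G" for g h
  proof (rule eq_matI)
    fix i j assume "i < dim_row (\<rho> g * \<rho> h)" "j < dim_col (\<rho> g * \<rho> h)"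
    hence i: "i < N" and j: "j < N" unfolding \<rho>_def by auto
    obtain l0 where l0: "l0 < N" "e l0 = h \<otimes> e j" using e_surj[of "h \<otimes> e j"] h e_carrier[OF j] by auto
    have "(\<rho> g * \<rho> h) $$ (i,j)
        = (\<Sum>l\<in>{0..<N}. (if e i = g \<otimes> e l then 1 else 0) * (if e l = h \<otimes> e j then 1 else 0))"
      unfolding \<rho>_def using i j by (auto simp: scalar_prod_def intro!: sum.cong)
    also have "\<dots> = (\<Sum>l\<in>{0..<N}. if l = l0 then (if e i = g \<otimes> e l0 then 1 else 0) else 0)"
      using l0 by (intro sum.cong) (auto simp: e_inj[symmetric])
    also have "\<dots> = \<rho> (g \<otimes> h) $$ (i,j)"
      unfolding \<rho>_def using i j l0 g h e_carrier[OF j] by (simp add: m_assoc)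
    finally show "\<rho> (g \<otimes> h) $$ (i,j) = (\<rho> g * \<rho> h) $$ (i,j)" ..
  qed (auto simp: \<rho>_def)
  moreover have "\<rho> \<one> = 1\<^sub>m N" unfolding \<rho>_def by (intro eq_matI) (auto simp: e_carrier e_inj)
  moreover have "N > 0" unfolding N_def using fin by (auto simp: card_gt_0_iff)
  ultimately have "is_rep G N \<rho>" unfolding is_rep_def \<rho>_def by auto
  moreover have "character G \<rho> g = (if g = \<one> then of_nat N else 0)" if g: "g \<in> carrier G" for g
  proof -
    have "character G \<rho> g = (\<Sum>i<N. if e i = g \<otimes> e i then 1 else 0)"
      using g unfolding \<rho>_def by (simp add: character_eq_mat_trace mat_trace_def)
    also have "\<dots> = (\<Sum>i<N. if g = \<one> then 1 else 0)"
      by (intro sum.cong refl) (use g e_carrier in auto)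
    finally show ?thesis by simp
  qed
  ultimately show ?thesis using that unfolding N_def by blast
qed

lemma sum_sum_mset_swap: "(\<Sum>x\<in>S. \<Sum>y\<in>#M. f x y) = (\<Sum>y\<in>#M. \<Sum>x\<in>S. f x y)"
  by (induction M) (auto simp: sum.distrib)

lemma regular_character_decomposition:
  assumes fin: "finite (carrier G)"
  obtains M where "set_mset M = Irr G" "\<And>\<psi>. \<psi> \<in> Irr G \<Longrightarrow> of_nat (count M \<psi>) = \<psi> \<one>"
    "\<And>g. g \<in> carrier G \<Longrightarrow> (\<Sum>\<chi>\<in>#M. \<chi> g) = (if g = \<one> then of_nat (card (carrier G)) else 0)"
proof -
  define N where "N = card (carrier G)"
  have N: "0 < N" unfolding N_def using fin by (auto simp: card_gt_0_iff)
  obtain \<rho> where r: "is_rep G N \<rho>"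
    and ch: "\<And>g. g \<in> carrier G \<Longrightarrow> character G \<rho> g = (if g = \<one> then of_nat N else 0)"
    using regular_rep_exists[OF fin] unfolding N_def by blast
  obtain M where M: "set_mset M \<subseteq> Irr G" and chM: "\<forall>g\<in>carrier G. character G \<rho> g = (\<Sum>\<chi>\<in>#M. \<chi> g)"
    using character_eq_sum_Irr[OF r] by blast
  have count: "of_nat (count M \<psi>) = \<psi> \<one>" if \<psi>: "\<psi> \<in> Irr G" for \<psi>
  proof -
    have "of_nat N * \<psi> \<one> = (\<Sum>g\<in>carrier G. if g = \<one> then of_nat N * \<psi> (inv g) else 0)"
      using fin by simp
    also have "\<dots> = (\<Sum>g\<in>carrier G. \<Sum>\<chi>\<in>#M. \<chi> g * \<psi> (inv g))"
      using ch chM by (intro sum.cong) (auto simp: sum_mset_distrib_right[symmetric])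
    also have "\<dots> = (\<Sum>\<chi>\<in>#M. if \<chi> = \<psi> then of_nat N else 0)"
      unfolding sum_sum_mset_swap using M \<psi> Irr_orthogonality unfolding N_def
      by (intro arg_cong[of _ _ sum_mset] image_mset_cong) auto
    also have "\<dots> = of_nat N * of_nat (count M \<psi>)" by (simp add: sum_mset_delta)
    finally show ?thesis using N by simp
  qed
  have "Irr G \<subseteq> set_mset M"
  proof
    fix \<psi> assume \<psi>: "\<psi> \<in> Irr G"
    then obtain n where "0 < n" "\<psi> \<one> = of_nat n" by (rule Irr_degree)
    thus "\<psi> \<in># M" using count[OF \<psi>] by (simp flip: count_greater_zero_iff)
  qed
  thus ?thesis using that M count ch chM unfolding N_def by auto
qed

lemma finite_Irr: "finite (carrier G) \<Longrightarrow> finite (Irr G)"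
  by (metis finite_set_mset regular_character_decomposition)

theorem sum_Irr_degree_mult_character:
  assumes fin: "finite (carrier G)" and g: "g \<in> carrier G"
  shows "(\<Sum>\<chi>\<in>Irr G. \<chi> \<one> * \<chi> g) = (if g = \<one> then of_nat (card (carrier G)) else 0)"
proof -
  obtain M where M: "set_mset M = Irr G" and count: "\<And>\<psi>. \<psi> \<in> Irr G \<Longrightarrow> of_nat (count M \<psi>) = \<psi> \<one>"
    and reg: "(\<Sum>\<chi>\<in>#M. \<chi> g) = (if g = \<one> then of_nat (card (carrier G)) else 0)"
    using regular_character_decomposition[OF fin] g by metis
  have finI: "finite (Irr G)" using finite_Irr[OF fin] .
  have "(\<Sum>\<chi>\<in>#M. \<chi> g) = (\<Sum>\<chi>\<in>#M. \<Sum>\<psi>\<in>Irr G. if \<chi> = \<psi> then \<psi> g else 0)"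
    using M finI by (intro arg_cong[of _ _ sum_mset] image_mset_cong) (auto simp: sum.delta)
  also have "\<dots> = (\<Sum>\<psi>\<in>Irr G. \<psi> \<one> * \<psi> g)"
    unfolding sum_sum_mset_swap[symmetric]
    by (intro sum.cong refl) (simp add: sum_mset_delta count mult.commute)
  finally show ?thesis using reg by simp
qed

end

section \<open>Conjugacy classes and column orthogonality\<close>

context group
begin

lemma conj_class_subset_carrier: "g \<in> carrier G \<Longrightarrow> conj_class G g \<subseteq> carrier G"
  unfolding conj_class_def by auto

lemma conj_class_self: "g \<in> carrier G \<Longrightarrow> g \<in> conj_class G g"
  unfolding conj_class_def by (auto intro!: exI[of _ \<one>])

lemma mem_conj_class_iff: "k \<in> conj_class G g \<longleftrightarrow> (\<exists>x\<in>carrier G. x \<otimes> g \<otimes> inv x = k)"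
  unfolding conj_class_def by auto

lemma finite_conj_class: "finite (carrier G) \<Longrightarrow> g \<in> carrier G \<Longrightarrow> finite (conj_class G g)"
  using conj_class_subset_carrier finite_subset by blast

lemma card_conj_class_pos: "finite (carrier G) \<Longrightarrow> g \<in> carrier G \<Longrightarrow> 0 < card (conj_class G g)"
  using conj_class_self finite_conj_class card_gt_0_iff by blast

lemma conj_class_eq:
  assumes g: "g \<in> carrier G" and k: "k \<in> conj_class G g"
  shows "conj_class G k = conj_class G g"
proof -
  obtain y where y: "y \<in> carrier G" and ky: "k = y \<otimes> g \<otimes> inv y"
    using k unfolding mem_conj_class_iff by auto
  have cancel: "inv a \<otimes> (a \<otimes> z) = z" if "a \<in> carrier G" "z \<in> carrier G" for a z
    using that by (simp add: m_assoc[symmetric])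
  have k_conj: "x \<otimes> k \<otimes> inv x = (x \<otimes> y) \<otimes> g \<otimes> inv (x \<otimes> y)" if "x \<in> carrier G" for x
    using that y g unfolding ky by (simp add: m_assoc inv_mult_group)
  have g_conj: "x \<otimes> g \<otimes> inv x = (x \<otimes> inv y) \<otimes> k \<otimes> inv (x \<otimes> inv y)" if "x \<in> carrier G" for x
    using that y g unfolding ky by (simp add: m_assoc inv_mult_group cancel)
  show ?thesis
  proof (intro equalityI subsetI)
    fix z assume "z \<in> conj_class G k"
    then obtain x where "x \<in> carrier G" "z = x \<otimes> k \<otimes> inv x" unfolding mem_conj_class_iff by auto
    thus "z \<in> conj_class G g" using k_conj y unfolding mem_conj_class_iff by (intro bexI[of _ "x \<otimes> y"]) auto
  next
    fix z assume "z \<in> conj_class G g"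
    then obtain x where "x \<in> carrier G" "z = x \<otimes> g \<otimes> inv x" unfolding mem_conj_class_iff by auto
    thus "z \<in> conj_class G k" using g_conj y unfolding mem_conj_class_iff by (intro bexI[of _ "x \<otimes> inv y"]) auto
  qed
qed

lemma conj_class_one: "conj_class G \<one> = {\<one>}"
  unfolding conj_class_def by force

lemma conj_classes_disjoint:
  assumes "C \<in> conj_classes G" "D \<in> conj_classes G" "C \<noteq> D"
  shows "C \<inter> D = {}"
  using assms conj_class_eq unfolding conj_classes_def by blast

lemma one_notin_conj_class:
  assumes "C \<in> conj_classes G" "C \<noteq> {\<one>}"
  shows "\<one> \<notin> C"
  using assms conj_class_eq[of _ \<one>] conj_class_one unfolding conj_classes_def by blast

lemma inv_mem_conj_class:
  assumes g: "g \<in> carrier G" and k: "k \<in> conj_class G g"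
  shows "inv k \<in> conj_class G (inv g)"
proof -
  obtain x where x: "x \<in> carrier G" and kx: "k = x \<otimes> g \<otimes> inv x"
    using k unfolding mem_conj_class_iff by auto
  have "inv k = x \<otimes> inv g \<otimes> inv x" unfolding kx using x g by (simp add: inv_mult_group m_assoc)
  thus ?thesis unfolding mem_conj_class_iff using x by metis
qed

lemma Irr_conj_class_const:
  assumes "\<chi> \<in> Irr G" and "g \<in> carrier G" and "k \<in> conj_class G g"
  shows "\<chi> k = \<chi> g"
  using assms unfolding mem_conj_class_iff
  by (elim IrrE bexE) (metis character_conj is_irr_rep_is_rep)

lemma Irr_inv_eq_cnj:
  assumes "finite (carrier G)" and "\<chi> \<in> Irr G" and "g \<in> carrier G"
  shows "\<chi> (inv g) = cnj (\<chi> g)" and "cmod (\<chi> g) \<le> cmod (\<chi> \<one>)"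
proof -
  obtain n \<rho> where irr: "is_irr_rep G n \<rho>" and \<chi>: "\<chi> = character G \<rho>"
    using assms(2) by (rule IrrE)
  note r = is_irr_rep_is_rep[OF irr]
  show "\<chi> (inv g) = cnj (\<chi> g)" using character_inv_eq_cnj(1)[OF assms(1) r assms(3)] \<chi> by simp
  show "cmod (\<chi> g) \<le> cmod (\<chi> \<one>)"
    using character_inv_eq_cnj(2)[OF assms(1) r assms(3)] \<chi> character_one[OF r] by simp
qed

text \<open>Column orthogonality: expand the indicator of \<open>x g x\<inverse> k\<inverse> = 1\<close> by the regular character
  and evaluate the conjugation sums.\<close>

theorem sum_Irr_mult_inv_eq_card:
  assumes fin: "finite (carrier G)" and g: "g \<in> carrier G" and k: "k \<in> carrier G"
  shows "(\<Sum>\<chi>\<in>Irr G. \<chi> g * \<chi> (inv k)) = of_nat (card {x \<in> carrier G. x \<otimes> g \<otimes> inv x = k})"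
proof -
  define N where "N = card (carrier G)"
  have N: "0 < N" unfolding N_def using fin by (auto simp: card_gt_0_iff)
  have "of_nat N * of_nat (card {x \<in> carrier G. x \<otimes> g \<otimes> inv x = k})
      = (\<Sum>x\<in>carrier G. if x \<otimes> g \<otimes> inv x = k then (of_nat N :: complex) else 0)"
    using fin by (simp add: sum.If_cases Collect_conj_eq Int_commute)
  also have "\<dots> = (\<Sum>x\<in>carrier G. \<Sum>\<chi>\<in>Irr G. \<chi> \<one> * \<chi> (x \<otimes> g \<otimes> inv x \<otimes> inv k))"
  proof (rule sum.cong[OF refl])
    fix x assume x: "x \<in> carrier G"
    have "x \<otimes> g \<otimes> inv x \<otimes> inv k = \<one> \<longleftrightarrow> x \<otimes> g \<otimes> inv x = k"
      using x g k by (metis inv_equality inv_inv r_inv inv_closed m_closed)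
    thus "(if x \<otimes> g \<otimes> inv x = k then of_nat N else 0) = (\<Sum>\<chi>\<in>Irr G. \<chi> \<one> * \<chi> (x \<otimes> g \<otimes> inv x \<otimes> inv k))"
      using sum_Irr_degree_mult_character[OF fin, of "x \<otimes> g \<otimes> inv x \<otimes> inv k"] x g k
      unfolding N_def by simp
  qed
  also have "\<dots> = (\<Sum>\<chi>\<in>Irr G. \<chi> \<one> * (\<Sum>x\<in>carrier G. \<chi> (x \<otimes> g \<otimes> inv x \<otimes> inv k)))"
    by (subst sum.swap) (simp add: sum_distrib_left)
  also have "\<dots> = (\<Sum>\<chi>\<in>Irr G. of_nat N * (\<chi> g * \<chi> (inv k)))"
  proof (rule sum.cong[OF refl])
    fix \<chi> assume "\<chi> \<in> Irr G"
    then obtain n \<rho> where irr: "is_irr_rep G n \<rho>" and \<chi>: "\<chi> = character G \<rho>" by (rule IrrE)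
    note r = is_irr_rep_is_rep[OF irr]
    show "\<chi> \<one> * (\<Sum>x\<in>carrier G. \<chi> (x \<otimes> g \<otimes> inv x \<otimes> inv k)) = of_nat N * (\<chi> g * \<chi> (inv k))"
      unfolding \<chi> character_conj_sum[OF irr g inv_closed[OF k]] character_one[OF r] N_def
      using is_rep_degree_pos[OF r] by simp
  qed
  finally show ?thesis using N by (simp add: sum_distrib_left[symmetric])
qed

lemma card_conj_class_mult_sum_Irr_norm_sq:
  assumes fin: "finite (carrier G)" and g: "g \<in> carrier G"
  shows "real (card (conj_class G g)) * (\<Sum>\<chi>\<in>Irr G. cmod (\<chi> g) ^ 2) = real (card (carrier G))"
proof -
  define F where "F = (\<lambda>k. {x \<in> carrier G. x \<otimes> g \<otimes> inv x = k})"
  have norm_sq: "\<chi> g * \<chi> (inv g) = of_real (cmod (\<chi> g) ^ 2)" if "\<chi> \<in> Irr G" for \<chi>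
    using Irr_inv_eq_cnj(1)[OF fin that g] by (simp add: complex_mult_cnj cmod_def)
  have cover: "carrier G = (\<Union>k\<in>conj_class G g. F k)"
    unfolding F_def using g by (auto simp: mem_conj_class_iff)
  have "card (carrier G) = (\<Sum>k\<in>conj_class G g. card (F k))"
    unfolding cover by (rule card_UN_disjoint) (use fin finite_conj_class[OF fin g] in \<open>auto simp: F_def\<close>)
  hence "(of_nat (card (carrier G)) :: complex) = (\<Sum>k\<in>conj_class G g. \<Sum>\<chi>\<in>Irr G. \<chi> g * \<chi> (inv k))"
    unfolding F_def using conj_class_subset_carrier[OF g] by (simp add: sum_Irr_mult_inv_eq_card[OF fin g] subset_iff)
  also have "\<dots> = (\<Sum>k\<in>conj_class G g. \<Sum>\<chi>\<in>Irr G. of_real (cmod (\<chi> g) ^ 2))"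
  proof (intro sum.cong refl)
    fix k \<chi> assume k: "k \<in> conj_class G g" and \<chi>: "\<chi> \<in> Irr G"
    have "\<chi> (inv k) = \<chi> (inv g)"
      using Irr_conj_class_const[OF \<chi> inv_closed[OF g] inv_mem_conj_class[OF g k]] .
    thus "\<chi> g * \<chi> (inv k) = of_real (cmod (\<chi> g) ^ 2)" using norm_sq[OF \<chi>] by simp
  qed
  also have "\<dots> = of_real (real (card (conj_class G g)) * (\<Sum>\<chi>\<in>Irr G. cmod (\<chi> g) ^ 2))"
    by (simp add: of_real_sum)
  finally show ?thesis by (metis of_real_eq_iff of_real_of_nat_eq)
qed

end

section \<open>The distance \<open>D\<^sub>H\<close>\<close>

context group
begin

lemma sum_remove_one_conj_class:
  fixes f :: "'a set \<Rightarrow> real"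
  assumes fin: "finite (carrier G)" and A: "A \<subseteq> carrier G"
  shows "(\<Sum>h\<in>A - {\<one>}. f (conj_class G h)) = (\<Sum>C\<in>conj_classes G - {{\<one>}}. real (card (C \<inter> A)) * f C)"
proof -
  let ?CL = "conj_classes G - {{\<one>}}"
  have cover: "A - {\<one>} = (\<Union>C\<in>?CL. C \<inter> A)"
  proof (intro equalityI subsetI)
    fix h assume h: "h \<in> A - {\<one>}"
    hence "conj_class G h \<in> ?CL" "h \<in> conj_class G h \<inter> A"
      using A conj_class_self[of h] conj_class_one unfolding conj_classes_def by auto
    thus "h \<in> (\<Union>C\<in>?CL. C \<inter> A)" by blast
  qed (use one_notin_conj_class in blast)
  have "(\<Sum>h\<in>A - {\<one>}. f (conj_class G h)) = (\<Sum>C\<in>?CL. \<Sum>h\<in>C \<inter> A. f (conj_class G h))"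
    unfolding cover using fin finite_subset[OF A fin] conj_classes_disjoint
    by (intro sum.UNION_disjoint) (auto simp: conj_classes_def)
  also have "\<dots> = (\<Sum>C\<in>?CL. \<Sum>h\<in>C \<inter> A. f C)"
    using conj_class_eq unfolding conj_classes_def by (intro sum.cong refl) auto
  finally show ?thesis by simp
qed

lemma D_dist_eq:
  assumes fin: "finite (carrier G)" and H: "subgroup H G"
  shows "D_dist G H = (\<Sum>\<chi>\<in>Irr G. cmod (\<chi> \<one>) * cmod (\<Sum>h\<in>H - {\<one>}. \<chi> h)) / real (card (carrier G))"
proof -
  have "finite H" using subgroup.subset[OF H] fin finite_subset by blast
  hence "(\<Sum>h\<in>H. \<chi> h) = \<chi> \<one> + (\<Sum>h\<in>H - {\<one>}. \<chi> h)" for \<chi> :: "'a \<Rightarrow> complex"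
    by (rule sum.remove[OF _ subgroup.one_closed[OF H]])
  hence "P_dist G H \<chi> - P_dist G {\<one>} \<chi> = \<chi> \<one> / of_nat (card (carrier G)) * (\<Sum>h\<in>H - {\<one>}. \<chi> h)" for \<chi>
    unfolding P_dist_def char_degree_def by (simp add: algebra_simps)
  thus ?thesis unfolding D_dist_def by (simp add: sum_divide_distrib norm_mult norm_divide)
qed

lemma sum_Irr_degree_norm_sq: "finite (carrier G) \<Longrightarrow> (\<Sum>\<chi>\<in>Irr G. cmod (\<chi> \<one>) ^ 2) = real (card (carrier G))"
  using card_conj_class_mult_sum_Irr_norm_sq[of \<one>] by (simp add: conj_class_one)

text \<open>Cauchy--Schwarz against the two column sums \<open>\<Sum> \<chi>(1)\<^sup>2 = |G|\<close> and \<open>\<Sum> |\<chi>(h)|\<^sup>2 = |G| / |C\<^sub>h|\<close>.\<close>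

lemma sum_Irr_degree_mult_norm_le:
  assumes fin: "finite (carrier G)" and h: "h \<in> carrier G"
  shows "(\<Sum>\<chi>\<in>Irr G. cmod (\<chi> \<one>) * cmod (\<chi> h))
      \<le> real (card (carrier G)) * real (card (conj_class G h)) powr (-1/2)"
proof -
  define N where "N = real (card (carrier G))"
  define m where "m = real (card (conj_class G h))"
  have m: "0 < m" unfolding m_def using card_conj_class_pos[OF fin h] by simp
  have "(\<Sum>\<chi>\<in>Irr G. cmod (\<chi> \<one>) * cmod (\<chi> h))
      \<le> L2_set (\<lambda>\<chi>. cmod (\<chi> \<one>)) (Irr G) * L2_set (\<lambda>\<chi>. cmod (\<chi> h)) (Irr G)"
    using L2_set_mult_ineq[where f = "\<lambda>\<chi>. cmod (\<chi> \<one>)" and g = "\<lambda>\<chi>. cmod (\<chi> h)" and A = "Irr G"]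
    by simp
  also have "\<dots> = sqrt N * sqrt (N / m)"
    using sum_Irr_degree_norm_sq[OF fin] card_conj_class_mult_sum_Irr_norm_sq[OF fin h] m
    unfolding L2_set_def N_def m_def by (simp add: field_simps)
  also have "\<dots> = N * m powr (-1/2)"
    using m by (simp add: real_sqrt_divide powr_minus_divide powr_half_sqrt field_simps
        real_sqrt_mult_self[of N, symmetric] N_def)
  finally show ?thesis unfolding N_def m_def .
qed

theorem D_dist_upper_bound:
  assumes fin: "finite (carrier G)" and H: "subgroup H G"
  shows "D_dist G H \<le> (\<Sum>C\<in>conj_classes G - {{\<one>}}. real (card (C \<inter> H)) * real (card C) powr (-1/2))"
proof -
  define N where "N = real (card (carrier G))"
  have N: "0 < N" unfolding N_def using fin by (auto simp: card_gt_0_iff)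
  have Hc: "H - {\<one>} \<subseteq> carrier G" using subgroup.subset[OF H] by blast
  have "D_dist G H * N = (\<Sum>\<chi>\<in>Irr G. cmod (\<chi> \<one>) * cmod (\<Sum>h\<in>H - {\<one>}. \<chi> h))"
    using D_dist_eq[OF fin H] N unfolding N_def by simp
  also have "\<dots> \<le> (\<Sum>\<chi>\<in>Irr G. cmod (\<chi> \<one>) * (\<Sum>h\<in>H - {\<one>}. cmod (\<chi> h)))"
    by (intro sum_mono mult_left_mono norm_sum) simp
  also have "\<dots> = (\<Sum>h\<in>H - {\<one>}. \<Sum>\<chi>\<in>Irr G. cmod (\<chi> \<one>) * cmod (\<chi> h))"
    by (simp add: sum_distrib_left sum.swap[of _ "Irr G"])
  also have "\<dots> \<le> (\<Sum>h\<in>H - {\<one>}. N * real (card (conj_class G h)) powr (-1/2))"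
    using sum_Irr_degree_mult_norm_le[OF fin] Hc unfolding N_def by (intro sum_mono) auto
  also have "\<dots> = N * (\<Sum>C\<in>conj_classes G - {{\<one>}}. real (card (C \<inter> H)) * real (card C) powr (-1/2))"
    using sum_remove_one_conj_class[OF fin subgroup.subset[OF H], of "\<lambda>C. N * real (card C) powr (-1/2)"]
    by (simp add: sum_distrib_left mult.left_commute)
  finally show ?thesis using N by (simp add: mult.commute)
qed

lemma card_conj_fiber:
  assumes fin: "finite (carrier G)" and h: "h \<in> carrier G" and k: "k \<in> conj_class G h"
  shows "real (card {x \<in> carrier G. x \<otimes> h \<otimes> inv x = k})
      = real (card (carrier G)) / real (card (conj_class G h))"
proof -
  have kc: "k \<in> carrier G" using k conj_class_subset_carrier[OF h] by blast
  have "(of_nat (card {x \<in> carrier G. x \<otimes> h \<otimes> inv x = k}) :: complex) = (\<Sum>\<chi>\<in>Irr G. \<chi> h * cnj (\<chi> h))"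
    unfolding sum_Irr_mult_inv_eq_card[OF fin h kc, symmetric]
  proof (intro sum.cong refl)
    fix \<chi> assume \<chi>: "\<chi> \<in> Irr G"
    show "\<chi> h * \<chi> (inv k) = \<chi> h * cnj (\<chi> h)"
      using Irr_inv_eq_cnj(1)[OF fin \<chi> kc] Irr_conj_class_const[OF \<chi> h k] by simp
  qed
  also have "\<dots> = of_real (\<Sum>\<chi>\<in>Irr G. cmod (\<chi> h) ^ 2)"
    unfolding of_real_sum complex_norm_square ..
  finally have "complex_of_real (card {x \<in> carrier G. x \<otimes> h \<otimes> inv x = k})
      = of_real (\<Sum>\<chi>\<in>Irr G. cmod (\<chi> h) ^ 2)"
    by simp
  hence "real (card {x \<in> carrier G. x \<otimes> h \<otimes> inv x = k}) = (\<Sum>\<chi>\<in>Irr G. cmod (\<chi> h) ^ 2)"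
    by (rule of_real_eq_iff[THEN iffD1])
  thus ?thesis using card_conj_class_mult_sum_Irr_norm_sq[OF fin h] card_conj_class_pos[OF fin h]
    by (simp add: field_simps)
qed

text \<open>Expand the square and apply column orthogonality.\<close>

lemma sum_Irr_norm_sq_sum:
  assumes fin: "finite (carrier G)" and A: "A \<subseteq> carrier G"
  shows "(\<Sum>\<chi>\<in>Irr G. cmod (\<Sum>h\<in>A - {\<one>}. \<chi> h) ^ 2)
      = real (card (carrier G)) * (\<Sum>C\<in>conj_classes G - {{\<one>}}. real (card (C \<inter> A)) ^ 2 / real (card C))"
proof -
  define N where "N = real (card (carrier G))"
  define cnt where "cnt = (\<lambda>h k. real (card {x \<in> carrier G. x \<otimes> h \<otimes> inv x = k}))"
  let ?A' = "A - {\<one>}"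
  have A': "?A' \<subseteq> carrier G" "finite ?A'" using A finite_subset[OF A fin] by auto
  have "(of_real (\<Sum>\<chi>\<in>Irr G. cmod (\<Sum>h\<in>?A'. \<chi> h) ^ 2) :: complex)
      = (\<Sum>\<chi>\<in>Irr G. \<Sum>h\<in>?A'. \<Sum>k\<in>?A'. \<chi> h * cnj (\<chi> k))"
    unfolding of_real_sum complex_norm_square by (simp add: sum_product cnj_sum)
  also have "\<dots> = (\<Sum>h\<in>?A'. \<Sum>k\<in>?A'. \<Sum>\<chi>\<in>Irr G. \<chi> h * cnj (\<chi> k))"
    by (subst sum.swap) (simp add: sum.swap[of _ "Irr G"])
  also have "\<dots> = of_real (\<Sum>h\<in>?A'. \<Sum>k\<in>?A'. cnt h k)"
    using A'(1) Irr_inv_eq_cnj(1)[OF fin] sum_Irr_mult_inv_eq_card[OF fin]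
    unfolding cnt_def of_real_sum by (intro sum.cong refl) (auto simp: subset_iff)
  finally have T: "(\<Sum>\<chi>\<in>Irr G. cmod (\<Sum>h\<in>?A'. \<chi> h) ^ 2) = (\<Sum>h\<in>?A'. \<Sum>k\<in>?A'. cnt h k)"
    using of_real_eq_iff by blast
  have row: "(\<Sum>k\<in>?A'. cnt h k) = real (card (conj_class G h \<inter> A)) * (N / real (card (conj_class G h)))"
    if h: "h \<in> ?A'" for h
  proof -
    have hc: "h \<in> carrier G" using h A by auto
    have "cnt h k = (if k \<in> conj_class G h then N / real (card (conj_class G h)) else 0)" for k
      using card_conj_fiber[OF fin hc] unfolding cnt_def N_def
      by (auto simp: mem_conj_class_iff card_eq_0_iff)
    hence "(\<Sum>k\<in>?A'. cnt h k) = real (card (?A' \<inter> conj_class G h)) * (N / real (card (conj_class G h)))"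
      using A'(2) by (simp add: sum.If_cases Int_def)
    moreover have "?A' \<inter> conj_class G h = conj_class G h \<inter> A"
      using one_notin_conj_class[of "conj_class G h"] h hc conj_class_self[OF hc]
      unfolding conj_classes_def by auto
    ultimately show ?thesis by simp
  qed
  have "(\<Sum>h\<in>?A'. \<Sum>k\<in>?A'. cnt h k)
      = (\<Sum>C\<in>conj_classes G - {{\<one>}}. real (card (C \<inter> A)) * (real (card (C \<inter> A)) * (N / real (card C))))"
    using sum_remove_one_conj_class[OF fin A, of "\<lambda>C. real (card (C \<inter> A)) * (N / real (card C))"] row
    by simp
  thus ?thesis unfolding T N_def by (simp add: sum_distrib_left power2_eq_square mult_ac)
qed

lemma norm_sum_Irr_le:
  assumes fin: "finite (carrier G)" and \<chi>: "\<chi> \<in> Irr G" and A: "A \<subseteq> carrier G" "finite A"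
  shows "cmod (\<Sum>h\<in>A. \<chi> h) \<le> real (card A) * cmod (\<chi> \<one>)"
proof -
  have "cmod (\<Sum>h\<in>A. \<chi> h) \<le> (\<Sum>h\<in>A. cmod (\<chi> h))" by (rule norm_sum)
  also have "\<dots> \<le> (\<Sum>h\<in>A. cmod (\<chi> \<one>))"
    using Irr_inv_eq_cnj(2)[OF fin \<chi>] A by (intro sum_mono) auto
  finally show ?thesis by simp
qed

lemma D_dist_pos:
  assumes fin: "finite (carrier G)" and H: "subgroup H G" and nontrivial: "H \<noteq> {\<one>}"
  shows "0 < D_dist G H"
proof -
  define \<chi>\<^sub>0 where "\<chi>\<^sub>0 = (\<lambda>g. if g \<in> carrier G then (1::complex) else 0)"
  have Hc: "H \<subseteq> carrier G" and one: "\<one> \<in> H" using H by (auto dest: subgroup.subset subgroup.one_closed)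
  have "H - {\<one>} \<noteq> {}" using one nontrivial by blast
  hence "0 < card (H - {\<one>})" using finite_subset[OF Hc fin] by (simp add: card_gt_0_iff)
  moreover have "(\<Sum>h\<in>H - {\<one>}. \<chi>\<^sub>0 h) = of_nat (card (H - {\<one>}))"
    unfolding \<chi>\<^sub>0_def using Hc by (simp add: subset_iff)
  ultimately have "0 < cmod (\<chi>\<^sub>0 \<one>) * cmod (\<Sum>h\<in>H - {\<one>}. \<chi>\<^sub>0 h)" unfolding \<chi>\<^sub>0_def by simp
  hence "0 < (\<Sum>\<chi>\<in>Irr G. cmod (\<chi> \<one>) * cmod (\<Sum>h\<in>H - {\<one>}. \<chi> h))"
    using finite_Irr[OF fin] trivial_character_in_Irr unfolding \<chi>\<^sub>0_def
    by (intro sum_pos2) auto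
  thus ?thesis unfolding D_dist_eq[OF fin H] using fin by (intro divide_pos_pos) (auto simp: card_gt_0_iff)
qed

text \<open>The second moment of the character sums is at most \<open>|H| - 1\<close> times their first moment.\<close>

theorem D_dist_lower_bound:
  assumes fin: "finite (carrier G)" and H: "subgroup H G" and nontrivial: "H \<noteq> {\<one>}"
  shows "(\<Sum>C\<in>conj_classes G - {{\<one>}}. real (card (C \<inter> H)) ^ 2 / (real (card H) * real (card C)))
      < D_dist G H"
proof -
  define N where "N = real (card (carrier G))"
  define S where "S = (\<lambda>\<chi>. \<Sum>h\<in>H - {\<one>}. (\<chi> h :: complex))"
  have Hc: "H \<subseteq> carrier G" and one: "\<one> \<in> H" using H by (auto dest: subgroup.subset subgroup.one_closed)
  have finH: "finite H" using finite_subset[OF Hc fin] .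
  have N: "0 < N" unfolding N_def using fin by (auto simp: card_gt_0_iff)
  have "1 \<le> card H" using finH one by (auto simp: Suc_le_eq card_gt_0_iff)
  have "cmod (S \<chi>) ^ 2 \<le> (real (card H) - 1) * (cmod (\<chi> \<one>) * cmod (S \<chi>))" if "\<chi> \<in> Irr G" for \<chi>
  proof -
    have "cmod (S \<chi>) \<le> (real (card H) - 1) * cmod (\<chi> \<one>)"
      using norm_sum_Irr_le[OF fin that, of "H - {\<one>}"] Hc finH one \<open>1 \<le> card H\<close>
      unfolding S_def by (auto simp: of_nat_diff)
    from mult_right_mono[OF this norm_ge_zero[of "S \<chi>"]] show ?thesis
      by (simp add: power2_eq_square mult_ac)
  qed
  hence "(\<Sum>\<chi>\<in>Irr G. cmod (S \<chi>) ^ 2) \<le> (real (card H) - 1) * (\<Sum>\<chi>\<in>Irr G. cmod (\<chi> \<one>) * cmod (S \<chi>))"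
    unfolding sum_distrib_left by (rule sum_mono)
  also have "\<dots> = (real (card H) - 1) * (N * D_dist G H)"
    using D_dist_eq[OF fin H] N unfolding N_def S_def by simp
  also have "\<dots> < real (card H) * (N * D_dist G H)" using D_dist_pos[OF fin H nontrivial] N by simp
  finally have "N * (\<Sum>C\<in>conj_classes G - {{\<one>}}. real (card (C \<inter> H)) ^ 2 / real (card C))
      < real (card H) * (N * D_dist G H)"
    unfolding S_def N_def sum_Irr_norm_sq_sum[OF fin Hc] .
  hence "(\<Sum>C\<in>conj_classes G - {{\<one>}}. real (card (C \<inter> H)) ^ 2 / real (card C)) / real (card H)
      < D_dist G H"
    using N \<open>1 \<le> card H\<close> by (simp add: divide_less_eq mult.commute)
  thus ?thesis by (simp add: sum_divide_distrib divide_divide_eq_left mult.commute)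
qed

end

theorem theorem1:
  fixes G :: "('g, 'b) monoid_scheme" and H :: "'g set"
  assumes "group G" and "finite (carrier G)" and "subgroup H G"
    and "H \<noteq> {\<one>\<^bsub>G\<^esub>}"
  shows "(\<Sum>C\<in>conj_classes G - {{\<one>\<^bsub>G\<^esub>}}.
            real (card (C \<inter> H)) ^ 2 / (real (card H) * real (card C)))
           < D_dist G H
       \<and> D_dist G H \<le> (\<Sum>C\<in>conj_classes G - {{\<one>\<^bsub>G\<^esub>}}.
            real (card (C \<inter> H)) * real (card C) powr (-1/2))"
proof -
  interpret group G by fact
  show ?thesis
    using D_dist_lower_bound[OF assms(2-4)] D_dist_upper_bound[OF assms(2,3)] by simp
qed

end
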